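(* SetCover reduces in logarithmic space to MinCover, both for the reconfigurable semantics and for the lossy semantics.
   Context: SetCover: input a finite set $\mathcal{U}$, a collection $\mathcal{S}$ of subsets of $\mathcal{U}$ and an integer $k$; question: is there a subcollection of $\mathcal{S}$ of size at most $k$ whose union is $\mathcal{U}$? A broadcast protocol is a tuple $P=(Q,I,M,\Delta)$ where $Q$ is a finite set of states, $I\subseteq Q$ initial states, $M$ a finite message alphabet and $\Delta\subseteq Q\times\{!!m,\ ??m \mid m\in M\}\times Q$ ($!!m$ = broadcast, $??m$ = reception); unspecified receptions are implicit self-loops, so protocols are complete for receptions. A configuration is a finite undirected graph $\gamma=(V,E,L)$, $E$ symmetric irreflexive, $L:V\to Q$; initial if $L(V)\subseteq I$. A reconfigurable step from $(V,E,L)$ to $(V,E',L')$ ($E'$ arbitrary): some node $v$ and $m$ with $(L(v),!!m,L'(v))\in\Delta$, every neighbour $v'$ of $v$ in $E$ satisfies $(L(v'),??m,L'(v'))\in\Delta$, every other node keeps its label. A lossy step from $(V,E,L)$ to $(V,E,L')$ (edges fixed): some $v$, $m$ with $(L(v),!!m,L'(v))\in\Delta$ and either all other nodes keep their labels (lost broadcast) or as in the reconfigurable step with $E$ (successful broadcast). A reconfigurable (resp. lossy) execution is a sequence $\gamma_0,\dots,\gamma_r$ with $\gamma_0$ initial and consecutive reconfigurable (resp. lossy) steps; its number of nodes is $|V|$, and it covers $F$ if some node of $\gamma_r$ has a label in $F$. MinCover (for a given semantics): input a broadcast protocol $P$, a set $F\subseteq Q$ and $k\in\mathbb{N}$; question: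 does there exist a reconfigurable (resp. lossy) execution covering $F$ with exactly $k$ nodes? *)

theory Defs
  imports Complex_Main
begin

text \<open>A SetCover instance: universe U, collection S of subsets of U, bound k.\<close>
type_synonym sc_inst = "nat set \<times> nat set set \<times> nat"

definition wf_sc :: "sc_inst \<Rightarrow> bool" where
  "wf_sc x = (case x of (U, S, k) \<Rightarrow> finite U \<and> finite S \<and> (\<forall>A\<in>S. A \<subseteq> U))"

definition setcover :: "sc_inst \<Rightarrow> bool" where
  "setcover x = (case x of (U, S, k) \<Rightarrow>
     (\<exists>C. C \<subseteq> S \<and> card C \<le> k \<and> \<Union>C = U))"

datatype act = Bc nat | Rc nat   \<comment> \<open>Bc m = !!m (broadcast), Rc m = ??m (reception)\<close>

text \<open>A protocol (Q, I, M, Delta); states and messages are natural numbers.\<close>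
type_synonym proto = "nat set \<times> nat set \<times> nat set \<times> (nat \<times> act \<times> nat) set"

definition wf_proto :: "proto \<Rightarrow> bool" where
  "wf_proto P = (case P of (Q, I, M, D) \<Rightarrow>
     finite Q \<and> I \<subseteq> Q \<and> finite M \<and>
     (\<forall>q a q'. (q, a, q') \<in> D \<longrightarrow> q \<in> Q \<and> q' \<in> Q \<and>
        (\<exists>m\<in>M. a = Bc m \<or> a = Rc m)))"

definition trans :: "proto \<Rightarrow> (nat \<times> act \<times> nat) set" where
  "trans P = (case P of (Q, I, M, D) \<Rightarrow> D)"

definition init_states :: "proto \<Rightarrow> nat set" where
  "init_states P = (case P of (Q, I, M, D) \<Rightarrow> I)"

text \<open>Receptions: unspecified receptions are implicit self-loops.\<close>
definition recv :: "proto \<Rightarrow> nat \<Rightarrow> nat \<Rightarrow> nat \<Rightarrow> bool" where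
  "recv P q m q' =
     ((q, Rc m, q') \<in> trans P \<or> (q' = q \<and> (\<forall>q''. (q, Rc m, q'') \<notin> trans P)))"

text \<open>Configurations: finite undirected graph (V, E, L), E symmetric and irreflexive.\<close>
type_synonym conf = "nat set \<times> (nat \<times> nat) set \<times> (nat \<Rightarrow> nat)"

definition ugraph :: "nat set \<Rightarrow> (nat \<times> nat) set \<Rightarrow> bool" where
  "ugraph V E = (finite V \<and> E \<subseteq> V \<times> V \<and> (\<forall>u v. (u, v) \<in> E \<longrightarrow> (v, u) \<in> E) \<and>
                 (\<forall>v. (v, v) \<notin> E))"

definition initial_conf :: "proto \<Rightarrow> conf \<Rightarrow> bool" where
  "initial_conf P \<gamma> = (case \<gamma> of (V, E, L) \<Rightarrow> ugraph V E \<and> L ` V \<subseteq> init_states P)"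

definition rstep :: "proto \<Rightarrow> conf \<Rightarrow> conf \<Rightarrow> bool" where
  "rstep P \<gamma> \<gamma>' = (case \<gamma> of (V, E, L) \<Rightarrow> case \<gamma>' of (V', E', L') \<Rightarrow>
     V' = V \<and> ugraph V E' \<and>
     (\<exists>v\<in>V. \<exists>m. (L v, Bc m, L' v) \<in> trans P \<and>
        (\<forall>u\<in>V. (v, u) \<in> E \<longrightarrow> recv P (L u) m (L' u)) \<and>
        (\<forall>u\<in>V. u \<noteq> v \<and> (v, u) \<notin> E \<longrightarrow> L' u = L u)))"

definition lstep :: "proto \<Rightarrow> conf \<Rightarrow> conf \<Rightarrow> bool" where
  "lstep P \<gamma> \<gamma>' = (case \<gamma> of (V, E, L) \<Rightarrow> case \<gamma>' of (V', E', L') \<Rightarrow>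
     V' = V \<and> E' = E \<and>
     (\<exists>v\<in>V. \<exists>m. (L v, Bc m, L' v) \<in> trans P \<and>
        ((\<forall>u\<in>V. u \<noteq> v \<longrightarrow> L' u = L u) \<or>
         ((\<forall>u\<in>V. (v, u) \<in> E \<longrightarrow> recv P (L u) m (L' u)) \<and>
          (\<forall>u\<in>V. u \<noteq> v \<and> (v, u) \<notin> E \<longrightarrow> L' u = L u)))))"

definition covers :: "nat set \<Rightarrow> conf \<Rightarrow> bool" where
  "covers F \<gamma> = (case \<gamma> of (V, E, L) \<Rightarrow> \<exists>v\<in>V. L v \<in> F)"

text \<open>MinCover instance: protocol P, target set F, number of nodes k.\<close>
type_synonym mc_inst = "proto \<times> nat set \<times> nat"

definition wf_mc :: "mc_inst \<Rightarrow> bool" where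
  "wf_mc y = (case y of (P, F, k) \<Rightarrow> wf_proto P \<and> finite (trans P) \<and>
     (case P of (Q, I, M, D) \<Rightarrow> F \<subseteq> Q))"

definition mincover_with :: "(proto \<Rightarrow> conf \<Rightarrow> conf \<Rightarrow> bool) \<Rightarrow> mc_inst \<Rightarrow> bool" where
  "mincover_with step y = (case y of (P, F, k) \<Rightarrow>
     (\<exists>\<gamma>0 \<gamma>. initial_conf P \<gamma>0 \<and> (step P)\<^sup>*\<^sup>* \<gamma>0 \<gamma> \<and> covers F \<gamma> \<and> card (fst \<gamma>) = k))"

definition mincover_rec :: "mc_inst \<Rightarrow> bool" where
  "mincover_rec = mincover_with rstep"

definition mincover_lossy :: "mc_inst \<Rightarrow> bool" where
  "mincover_lossy = mincover_with lstep"

datatype tok = T0 | T1 | TL | TR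

fun bin :: "nat \<Rightarrow> tok list" where
  "bin 0 = []"
| "bin (Suc n) = (if even (Suc n) then T0 else T1) # bin (Suc n div 2)"

definition enc_list :: "tok list list \<Rightarrow> tok list" where
  "enc_list ws = TL # concat (map (\<lambda>w. TL # w @ [TR]) ws) @ [TR]"

definition natenc :: "nat \<Rightarrow> tok list \<Rightarrow> bool" where
  "natenc n w = (w = bin n)"

definition encodes_set :: "('a \<Rightarrow> tok list \<Rightarrow> bool) \<Rightarrow> 'a set \<Rightarrow> tok list \<Rightarrow> bool" where
  "encodes_set R A w = (\<exists>xs ws. distinct xs \<and> set xs = A \<and> list_all2 R xs ws \<and> w = enc_list ws)"

fun enc_act :: "act \<Rightarrow> tok list" where
  "enc_act (Bc m) = enc_list [bin 0, bin m]"
| "enc_act (Rc m) = enc_list [bin 1, bin m]"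

definition transenc :: "nat \<times> act \<times> nat \<Rightarrow> tok list \<Rightarrow> bool" where
  "transenc t w = (case t of (q, a, q') \<Rightarrow> w = enc_list [bin q, enc_act a, bin q'])"

definition encodes_sc :: "sc_inst \<Rightarrow> tok list \<Rightarrow> bool" where
  "encodes_sc x w = (case x of (U, S, k) \<Rightarrow>
     \<exists>wU wS. encodes_set natenc U wU \<and> encodes_set (encodes_set natenc) S wS \<and>
       w = enc_list [wU, wS, bin k])"

definition encodes_mc :: "mc_inst \<Rightarrow> tok list \<Rightarrow> bool" where
  "encodes_mc y w = (case y of ((Q, I, M, D), F, k) \<Rightarrow>
     \<exists>wQ wI wM wD wF. encodes_set natenc Q wQ \<and> encodes_set natenc I wI \<and>
       encodes_set natenc M wM \<and> encodes_set transenc D wD \<and> encodes_set natenc F wF \<and>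
       w = enc_list [wQ, wI, wM, wD, wF, bin k])"

text \<open>Deterministic Turing transducer: read-only input tape with endmarkers (cells 0 and
  n+1 read None), one binary work tape (None = blank), write-only output tape.\<close>

datatype dir = Lt | St | Rt

record tm =
  nst :: nat
  q0 :: nat
  qf :: nat
  dl :: "nat \<Rightarrow> tok option \<Rightarrow> bool option \<Rightarrow> nat \<times> dir \<times> bool option \<times> dir \<times> tok option"

type_synonym tmconf = "nat \<times> nat \<times> (nat \<Rightarrow> bool option) \<times> nat \<times> tok list"

definition wf_tm :: "tm \<Rightarrow> bool" where
  "wf_tm M = (q0 M < nst M \<and> qf M < nst M \<and>
     (\<forall>q < nst M. \<forall>a b. fst (dl M q a b) < nst M))"

fun mv :: "dir \<Rightarrow> nat \<Rightarrow> nat" where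
  "mv Lt p = p - 1"
| "mv St p = p"
| "mv Rt p = p + 1"

definition read_in :: "tok list \<Rightarrow> nat \<Rightarrow> tok option" where
  "read_in w i = (if 1 \<le> i \<and> i \<le> length w then Some (w ! (i - 1)) else None)"

definition tm_step :: "tm \<Rightarrow> tok list \<Rightarrow> tmconf \<Rightarrow> tmconf" where
  "tm_step M w c = (case c of (q, i, t, h, out) \<Rightarrow>
     if q = qf M then c else
     (case dl M q (read_in w i) (t h) of (q', di, s, dw, ob) \<Rightarrow>
        (q', min (length w + 1) (mv di i), t(h := s), mv dw h,
         out @ (case ob of None \<Rightarrow> [] | Some a \<Rightarrow> [a]))))"

definition tm_run :: "tm \<Rightarrow> tok list \<Rightarrow> nat \<Rightarrow> tmconf" where
  "tm_run M w n = (tm_step M w ^^ n) (q0 M, 0, \<lambda>_. None, 0, [])"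

definition cstate :: "tmconf \<Rightarrow> nat" where "cstate c = (case c of (q, i, t, h, out) \<Rightarrow> q)"
definition cwhead :: "tmconf \<Rightarrow> nat" where "cwhead c = (case c of (q, i, t, h, out) \<Rightarrow> h)"
definition coutput :: "tmconf \<Rightarrow> tok list" where "coutput c = (case c of (q, i, t, h, out) \<Rightarrow> out)"

definition logspace_computes :: "tm \<Rightarrow> (tok list \<Rightarrow> tok list) \<Rightarrow> bool" where
  "logspace_computes M f = (wf_tm M \<and> (\<exists>c::real. \<forall>w.
     (\<exists>n. cstate (tm_run M w n) = qf M \<and> coutput (tm_run M w n) = f w) \<and>
     (\<forall>n. real (cwhead (tm_run M w n)) \<le> c * log 2 (real (length w) + 2))))"

definition logspace_reduces_sc_to :: "(mc_inst \<Rightarrow> bool) \<Rightarrow> bool" where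
  "logspace_reduces_sc_to Prob = (\<exists>M f. logspace_computes M f \<and>
     (\<forall>x w. wf_sc x \<and> encodes_sc x w \<longrightarrow>
        (\<exists>y. wf_mc y \<and> encodes_mc y (f w) \<and> (setcover x \<longleftrightarrow> Prob y))))"

end

theory Submission
  imports Defs "HOL-Library.Countable_Set"
begin

text \<open>An instance \<open>(U, S, k)\<close> with \<open>U = {u\<^sub>1, \<dots>, u\<^sub>n}\<close> and \<open>S = {A\<^sub>1, \<dots>, A\<^sub>m}\<close> is mapped
  to a protocol with a collector chain \<open>1 \<rightarrow> 2 \<rightarrow> \<dots> \<rightarrow> n + 1\<close>, whose state \<open>i\<close> moves to
  \<open>i + 1\<close> on receiving \<open>u\<^sub>i\<close>, and with one state \<open>n + 1 + j\<close> per set \<open>A\<^sub>j\<close>, which broadcasts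
  the elements of \<open>A\<^sub>j\<close> without ever changing. The initial states are \<open>1\<close> and the set states,
  the target is \<open>n + 1\<close>, and executions have \<open>k + 1\<close> nodes. A cover by at most \<open>k\<close> sets gives
  a star whose leaves are the chosen sets and whose centre collects \<open>U\<close>. Conversely, set nodes
  never move and a collector only advances on messages broadcast by set nodes, so once a
  collector reaches \<open>n + 1\<close> the sets of the at most \<open>k\<close> other nodes cover \<open>U\<close>. Neither argument
  uses losses or reconfiguration, which is why one reduction serves both semantics.

  The output is produced by six passes over the input, one per component of the MinCover
  instance, that only need a single counter for naming states; a Turing machine keeping this
  counter in binary on its work tape therefore uses \<open>O(log n)\<close> space.\<close>

fun bin_incr :: "tok list \<Rightarrow> tok list" where
  "bin_incr [] = [T1]"
| "bin_incr (T1 # bs) = T0 # bin_incr bs"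
| "bin_incr (b # bs) = T1 # bs"

lemma set_bin_subset: "set (bin n) \<subseteq> {T0, T1}"
  by (induction n rule: bin.induct) auto

lemma bin_Suc: "bin (Suc n) = bin_incr (bin n)"
proof (induction n rule: less_induct)
  case (less n)
  show ?case
  proof (cases n)
    case (Suc m)
    show ?thesis
    proof (cases "even m")
      case True
      then have "Suc (Suc m) div 2 = Suc (Suc m div 2)" by presburger
      moreover have "bin (Suc (Suc m div 2)) = bin_incr (bin (Suc m div 2))"
        using less Suc by simp
      ultimately show ?thesis using Suc True by simp
    next
      case False
      then have "Suc (Suc m) div 2 = Suc m div 2" by presburger
      then show ?thesis using Suc False by simp
    qed
  qed simp
qed

lemma length_bin: "length (bin n) = (if n = 0 then 0 else Suc (length (bin (n div 2))))"
  by (cases n) auto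

lemma length_bin_mono: "m \<le> n \<Longrightarrow> length (bin m) \<le> length (bin n)"
proof (induction n arbitrary: m rule: less_induct)
  case (less n)
  show ?case
  proof (cases "m = 0")
    case False
    then have "length (bin (m div 2)) \<le> length (bin (n div 2))"
      using less by (simp add: div_le_mono)
    then show ?thesis using False less.prems by (subst (1 2) length_bin) simp
  qed simp
qed

lemma two_pow_length_bin_le: "0 < n \<Longrightarrow> 2 ^ (length (bin n) - 1) \<le> n"
proof (induction n rule: less_induct)
  case (less n)
  show ?case
  proof (cases "n div 2 = 0")
    case False
    then have "2 ^ (length (bin (n div 2)) - 1) \<le> n div 2" and "length (bin (n div 2)) \<noteq> 0"
      using less by (simp_all add: length_bin)
    then have "2 ^ length (bin (n div 2)) \<le> 2 * (n div 2)"
      by (metis Suc_diff_1 bot_nat_0.not_eq_extremum mult_le_mono2 power_Suc)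
    then show ?thesis using less.prems by (subst length_bin) simp
  qed (use less.prems in \<open>simp add: length_bin\<close>)
qed

lemma length_bin_Suc_le_log: "real (length (bin (Suc n))) + 1 \<le> 3 * log 2 (real n + 2)"
proof -
  have "2 ^ (length (bin (Suc n)) - 1) \<le> n + 2"
    using two_pow_length_bin_le[of "Suc n"] by simp
  then have "real (length (bin (Suc n)) - 1) \<le> log 2 (real n + 2)"
    using le_log2_of_power[of "length (bin (Suc n)) - 1" "n + 2"] by (simp add: add.commute)
  moreover have "1 \<le> log 2 (real n + 2)" by simp
  moreover have "length (bin (Suc n)) \<noteq> 0" by simp
  ultimately show ?thesis by linarith
qed

section \<open>A six-pass streaming transducer with one counter\<close>

datatype instr = Emit tok | EmitCounter | Incr | Reset

fun exec_instr :: "instr \<Rightarrow> nat \<times> tok list \<Rightarrow> nat \<times> tok list" where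
  "exec_instr (Emit t) (c, out) = (c, out @ [t])"
| "exec_instr EmitCounter (c, out) = (c, out @ bin c)"
| "exec_instr Incr (c, out) = (Suc c, out)"
| "exec_instr Reset (c, out) = (0, out)"

definition exec_instrs :: "instr list \<Rightarrow> nat \<times> tok list \<Rightarrow> nat \<times> tok list" where
  "exec_instrs ins s = fold exec_instr ins s"

lemma exec_instrs_simps [simp]:
  "exec_instrs [] s = s"
  "exec_instrs (Emit t # ins) (c, out) = exec_instrs ins (c, out @ [t])"
  "exec_instrs (EmitCounter # ins) (c, out) = exec_instrs ins (c, out @ bin c)"
  "exec_instrs (Incr # ins) (c, out) = exec_instrs ins (Suc c, out)"
  "exec_instrs (Reset # ins) (c, out) = exec_instrs ins (0, out)"
  by (simp_all add: exec_instrs_def)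

text \<open>A pass state \<open>(s, d, cr)\<close> records the top-level component of the input being read
  (\<open>s = 1, 2, 3\<close> for the universe, the collection and the bound), the bracket depth \<open>d\<close>
  (capped at 7) and, in the last pass, the carry \<open>cr\<close> of the increment of the bound.
  Pass \<open>p\<close> writes the \<open>p\<close>-th component of the MinCover instance: the states, the initial
  states, the messages, the transitions, the target set and the number of nodes. The counter
  holds the name of the state currently being described.\<close>

type_synonym pstate = "nat \<times> nat \<times> nat"

definition is_bit :: "tok \<Rightarrow> bool" where "is_bit t = (t = T0 \<or> t = T1)"

definition pass_next :: "nat \<Rightarrow> pstate \<Rightarrow> tok \<Rightarrow> pstate" where
  "pass_next p \<sigma> t = (case \<sigma> of (s, d, cr) \<Rightarrow> (case t of
      TL \<Rightarrow> (if d = 1 then min 3 (Suc s) else s, min 7 (Suc d), cr)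
    | TR \<Rightarrow> (s, d - 1, cr)
    | T0 \<Rightarrow> (if p = 5 \<and> s = 3 \<and> d = 2 then (s, d, 0) else (s, d, cr))
    | T1 \<Rightarrow> (s, d, cr)))"

definition pass_emit :: "nat \<Rightarrow> pstate \<Rightarrow> tok \<Rightarrow> instr list" where
  "pass_emit p \<sigma> t = (case \<sigma> of (s, d, cr) \<Rightarrow>
   if p = 0 then (if t = TL \<and> (s = 1 \<or> s = 2) \<and> d = 3 then [Incr, Emit TL, EmitCounter, Emit TR] else [])
   else if p = 1 then (if t = TL \<and> s = 1 \<and> d = 3 then [Incr]
      else if t = TL \<and> s = 2 \<and> d = 3 then [Incr, Emit TL, EmitCounter, Emit TR] else [])
   else if p = 2 then (if s = 1 \<and> ((t = TL \<and> d \<ge> 2) \<or> (t \<noteq> TL \<and> d \<ge> 3)) then [Emit t] else [])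
   else if p = 3 then
     (if s = 1 \<and> t = TL \<and> d = 3 then [Emit TL, Emit TL, Emit TL, EmitCounter, Emit TR, Emit TL, Emit TL, Emit TL, Emit T1, Emit TR, Emit TL]
      else if s = 1 \<and> is_bit t \<and> d = 4 then [Emit t]
      else if s = 1 \<and> t = TR \<and> d = 4 then [Emit TR, Emit TR, Emit TR, Incr, Emit TL, EmitCounter, Emit TR, Emit TR, Emit TR]
      else if s = 2 \<and> t = TL \<and> d = 3 then [Incr]
      else if s = 2 \<and> t = TL \<and> d = 5 then [Emit TL, Emit TL, Emit TL, EmitCounter, Emit TR, Emit TL, Emit TL, Emit TL, Emit TR, Emit TL]
      else if s = 2 \<and> is_bit t \<and> d = 6 then [Emit t]
      else if s = 2 \<and> t = TR \<and> d = 6 then [Emit TR, Emit TR, Emit TR, Emit TL, EmitCounter, Emit TR, Emit TR, Emit TR]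
      else [])
   else if p = 4 then (if t = TL \<and> s = 1 \<and> d = 3 then [Incr] else [])
   else (if s = 3 \<and> d = 2 \<and> is_bit t then (if cr = 1 then (if t = T1 then [Emit T0] else [Emit T1]) else [Emit t])
         else []))"

definition pass_start :: "nat \<Rightarrow> instr list" where
  "pass_start p = (if p = 0 then [Emit TL, Emit TL, Emit TL, Reset, Incr, Emit TL, EmitCounter, Emit TR]
    else if p = 1 then [Emit TL, Emit TL, Reset, Incr, Emit TL, EmitCounter, Emit TR]
    else if p = 2 then [Emit TL]
    else if p = 3 then [Emit TL, Emit TL, Reset, Incr]
    else if p = 4 then [Emit TL, Emit TL, Reset, Incr]
    else [Emit TL])"

definition pass_finish :: "nat \<Rightarrow> pstate \<Rightarrow> instr list" where
  "pass_finish p \<sigma> = (if p = 0 then [Emit TR, Emit TR]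
    else if p = 1 then [Emit TR, Emit TR]
    else if p = 2 then [Emit TR]
    else if p = 3 then [Emit TR, Emit TR]
    else if p = 4 then [Emit TL, EmitCounter, Emit TR, Emit TR, Emit TR]
    else (if snd (snd \<sigma>) = 1 then [Emit T1] else []) @ [Emit TR, Emit TR])"

definition pstate0 :: pstate where "pstate0 = (0, 0, 1)"

definition pass_step :: "nat \<Rightarrow> tok \<Rightarrow> pstate \<times> nat \<times> tok list \<Rightarrow> pstate \<times> nat \<times> tok list" where
  "pass_step p t st = (case st of (\<sigma>, co) \<Rightarrow> (pass_next p \<sigma> t, exec_instrs (pass_emit p \<sigma> t) co))"

definition run_pass :: "tok list \<Rightarrow> nat \<Rightarrow> nat \<times> tok list \<Rightarrow> nat \<times> tok list" where
  "run_pass w p co = (case fold (pass_step p) w (pstate0, exec_instrs (pass_start p) co) of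
     (\<sigma>, co') \<Rightarrow> exec_instrs (pass_finish p \<sigma>) co')"

definition reduce_word :: "tok list \<Rightarrow> tok list" where
  "reduce_word w = snd (fold (run_pass w) [0..<6] (0, []))"

lemma pass_step_simp [simp]:
  "pass_step p t (\<sigma>, co) = (pass_next p \<sigma> t, exec_instrs (pass_emit p \<sigma> t) co)"
  by (simp add: pass_step_def)

lemmas pass_table = pass_next_def pass_emit_def is_bit_def numeral_2_eq_2[symmetric]

lemma fold_pass_step_bits:
  assumes "set bs \<subseteq> {T0, T1}" "pass_next p \<sigma> T0 = \<sigma>" "pass_next p \<sigma> T1 = \<sigma>"
  shows "pass_emit p \<sigma> T0 = [Emit T0] \<Longrightarrow> pass_emit p \<sigma> T1 = [Emit T1] \<Longrightarrow>
      fold (pass_step p) bs (\<sigma>, c, out) = (\<sigma>, c, out @ bs)"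
    and "pass_emit p \<sigma> T0 = [] \<Longrightarrow> pass_emit p \<sigma> T1 = [] \<Longrightarrow>
      fold (pass_step p) bs (\<sigma>, c, out) = (\<sigma>, c, out)"
  using assms by (induction bs arbitrary: out) auto

lemma fold_pass_step_bin [simp]:
  "pass_next p \<sigma> T0 = \<sigma> \<Longrightarrow> pass_next p \<sigma> T1 = \<sigma> \<Longrightarrow>
    pass_emit p \<sigma> T0 = [Emit T0] \<Longrightarrow> pass_emit p \<sigma> T1 = [Emit T1] \<Longrightarrow>
    fold (pass_step p) (bin n) (\<sigma>, c, out) = (\<sigma>, c, out @ bin n)"
  "pass_next p \<sigma> T0 = \<sigma> \<Longrightarrow> pass_next p \<sigma> T1 = \<sigma> \<Longrightarrow>
    pass_emit p \<sigma> T0 = [] \<Longrightarrow> pass_emit p \<sigma> T1 = [] \<Longrightarrow>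
    fold (pass_step p) (bin n) (\<sigma>, c, out) = (\<sigma>, c, out)"
  by (simp_all add: fold_pass_step_bits set_bin_subset)

definition num_word :: "nat \<Rightarrow> tok list" where "num_word n = TL # bin n @ [TR]"
definition nums_word :: "nat list \<Rightarrow> tok list" where "nums_word ns = concat (map num_word ns)"
definition range_word :: "nat \<Rightarrow> nat \<Rightarrow> tok list" where "range_word c n = nums_word [c..<c + n]"
definition set_word :: "nat list \<Rightarrow> tok list" where "set_word A = [TL, TL] @ nums_word A @ [TR, TR]"
definition sets_word :: "nat list list \<Rightarrow> tok list" where "sets_word As = concat (map set_word As)"

definition trans_enc :: "nat \<times> act \<times> nat \<Rightarrow> tok list" where
  "trans_enc t = (case t of (q, a, q') \<Rightarrow> enc_list [bin q, enc_act a, bin q'])"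

definition trans_word :: "nat \<times> act \<times> nat \<Rightarrow> tok list" where
  "trans_word t = TL # trans_enc t @ [TR]"

definition sc_word :: "nat list \<Rightarrow> nat list list \<Rightarrow> nat \<Rightarrow> tok list" where
  "sc_word us As k = enc_list [enc_list (map bin us), enc_list (map (\<lambda>A. enc_list (map bin A)) As), bin k]"

lemma nums_word_simps [simp]:
  "nums_word [] = []" "nums_word (n # ns) = num_word n @ nums_word ns"
  by (simp_all add: nums_word_def)

lemma sets_word_simps [simp]:
  "sets_word [] = []" "sets_word (A # As) = set_word A @ sets_word As"
  by (simp_all add: sets_word_def)

lemma range_word_0 [simp]: "range_word c 0 = []"
  by (simp add: range_word_def)

lemma range_word_Suc: "range_word c (Suc n) = num_word c @ range_word (Suc c) n"
proof -
  have "[c..<c + Suc n] = c # [Suc c..<Suc c + n]" by (subst upt_conv_Cons) auto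
  then show ?thesis by (simp add: range_word_def)
qed

lemma range_word_add: "range_word c (m + n) = range_word c m @ range_word (c + m) n"
proof -
  have "[c..<c + (m + n)] = [c..<c + m] @ [c + m..<c + m + n]"
    using upt_add_eq_append[of c "c + m" n] by (simp add: add.assoc)
  then show ?thesis by (simp add: range_word_def nums_word_def)
qed

lemma enc_list_map_bin: "enc_list (map bin ns) = TL # nums_word ns @ [TR]"
  by (simp add: enc_list_def nums_word_def num_word_def[abs_def] o_def)

lemma sc_word_flat:
  "sc_word us As k = [TL, TL, TL] @ nums_word us @ [TR, TR, TL, TL] @ sets_word As @ [TR, TR, TL]
     @ bin k @ [TR, TR]"
  by (simp add: sc_word_def enc_list_def nums_word_def num_word_def[abs_def] sets_word_def
      set_word_def[abs_def] o_def)

fun collector_trans :: "nat \<Rightarrow> nat list \<Rightarrow> (nat \<times> act \<times> nat) list" where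
  "collector_trans c [] = []"
| "collector_trans c (u # us) = (c, Rc u, Suc c) # collector_trans (Suc c) us"

fun set_trans :: "nat \<Rightarrow> nat list list \<Rightarrow> (nat \<times> act \<times> nat) list" where
  "set_trans c [] = []"
| "set_trans c (A # As) = map (\<lambda>a. (Suc c, Bc a, Suc c)) A @ set_trans (Suc c) As"

abbreviation in_univ :: pstate where "in_univ \<equiv> (Suc 0, 3, Suc 0)"
abbreviation in_sets :: pstate where "in_sets \<equiv> (2, 3, Suc 0)"
abbreviation in_set :: pstate where "in_set \<equiv> (2, 5, Suc 0)"

lemma pass_univ_elem:
  "fold (pass_step 0) (num_word u) (in_univ, c, out) = (in_univ, Suc c, out @ num_word (Suc c))"
  "fold (pass_step (Suc 0)) (num_word u) (in_univ, c, out) = (in_univ, Suc c, out)"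
  "fold (pass_step 2) (num_word u) (in_univ, c, out) = (in_univ, c, out @ num_word u)"
  "fold (pass_step 3) (num_word u) (in_univ, c, out) = (in_univ, Suc c, out @ trans_word (c, Rc u, Suc c))"
  "fold (pass_step 4) (num_word u) (in_univ, c, out) = (in_univ, Suc c, out)"
  "fold (pass_step 5) (num_word u) (in_univ, c, out) = (in_univ, c, out)"
  by (simp_all add: num_word_def pass_table trans_word_def trans_enc_def enc_list_def)

lemma pass_set_elem:
  "p < 6 \<Longrightarrow> p \<noteq> 3 \<Longrightarrow> fold (pass_step p) (num_word u) (in_set, c, out) = (in_set, c, out)"
  "fold (pass_step 3) (num_word u) (in_set, c, out) = (in_set, c, out @ trans_word (c, Bc u, c))"
proof -
  assume "p < 6" "p \<noteq> 3"
  then have "p = 0 \<or> p = 1 \<or> p = 2 \<or> p = 4 \<or> p = 5" by arith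
  then show "fold (pass_step p) (num_word u) (in_set, c, out) = (in_set, c, out)"
    by (elim disjE) (simp_all add: num_word_def pass_table)
qed (simp add: num_word_def pass_table trans_word_def trans_enc_def enc_list_def)

lemma pass_set_elems:
  "p < 6 \<Longrightarrow> p \<noteq> 3 \<Longrightarrow> fold (pass_step p) (nums_word A) (in_set, c, out) = (in_set, c, out)"
  "fold (pass_step 3) (nums_word A) (in_set, c, out) =
     (in_set, c, out @ concat (map (\<lambda>a. trans_word (c, Bc a, c)) A))"
  by (induction A arbitrary: out) (simp_all add: pass_set_elem)

lemma pass_set_word:
  "fold (pass_step 0) (set_word A) (in_sets, c, out) = (in_sets, Suc c, out @ num_word (Suc c))"
  "fold (pass_step (Suc 0)) (set_word A) (in_sets, c, out) = (in_sets, Suc c, out @ num_word (Suc c))"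
  "fold (pass_step 2) (set_word A) (in_sets, c, out) = (in_sets, c, out)"
  "fold (pass_step 3) (set_word A) (in_sets, c, out) =
     (in_sets, Suc c, out @ concat (map trans_word (map (\<lambda>a. (Suc c, Bc a, Suc c)) A)))"
  "fold (pass_step 4) (set_word A) (in_sets, c, out) = (in_sets, c, out)"
  "fold (pass_step 5) (set_word A) (in_sets, c, out) = (in_sets, c, out)"
  by (simp_all add: set_word_def pass_table num_word_def pass_set_elems o_def)

lemma pass_univ_list:
  "fold (pass_step 0) (nums_word us) (in_univ, c, out) = (in_univ, c + length us, out @ range_word (Suc c) (length us))"
  "fold (pass_step (Suc 0)) (nums_word us) (in_univ, c, out) = (in_univ, c + length us, out)"
  "fold (pass_step 2) (nums_word us) (in_univ, c, out) = (in_univ, c, out @ nums_word us)"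
  "fold (pass_step 3) (nums_word us) (in_univ, c, out) =
     (in_univ, c + length us, out @ concat (map trans_word (collector_trans c us)))"
  "fold (pass_step 4) (nums_word us) (in_univ, c, out) = (in_univ, c + length us, out)"
  "fold (pass_step 5) (nums_word us) (in_univ, c, out) = (in_univ, c, out)"
  by (induction us arbitrary: c out) (simp_all add: pass_univ_elem range_word_Suc)

lemma pass_sets_list:
  "fold (pass_step 0) (sets_word As) (in_sets, c, out) = (in_sets, c + length As, out @ range_word (Suc c) (length As))"
  "fold (pass_step (Suc 0)) (sets_word As) (in_sets, c, out) = (in_sets, c + length As, out @ range_word (Suc c) (length As))"
  "fold (pass_step 2) (sets_word As) (in_sets, c, out) = (in_sets, c, out)"
  "fold (pass_step 3) (sets_word As) (in_sets, c, out) =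
     (in_sets, c + length As, out @ concat (map trans_word (set_trans c As)))"
  "fold (pass_step 4) (sets_word As) (in_sets, c, out) = (in_sets, c, out)"
  "fold (pass_step 5) (sets_word As) (in_sets, c, out) = (in_sets, c, out)"
  by (induction As arbitrary: c out) (simp_all add: pass_set_word range_word_Suc)

text \<open>The carry is still pending exactly when all bits read so far were ones.\<close>

lemma pass5_incr_bits:
  assumes "set bs \<subseteq> {T0, T1}"
  shows "\<exists>cr X. fold (pass_step 5) bs ((3, 2, Suc 0), c, out) = ((3, 2, cr), c, out @ X) \<and>
     X @ (if cr = 1 then [T1] else []) = bin_incr bs"
  using assms
proof (induction bs arbitrary: out)
  case (Cons b bs)
  then have "b = T0 \<or> b = T1" and bits: "set bs \<subseteq> {T0, T1}" by auto
  then show ?case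
  proof (elim disjE)
    assume "b = T0"
    then show ?thesis using fold_pass_step_bits(1)[OF bits, of 5 "(3, 2, 0)" c "out @ [T1]"]
      by (intro exI[of _ 0] exI[of _ "T1 # bs"]) (simp add: pass_table)
  next
    assume "b = T1"
    obtain cr X where "fold (pass_step 5) bs ((3, 2, Suc 0), c, out @ [T0]) = ((3, 2, cr), c, out @ [T0] @ X)"
      and "X @ (if cr = 1 then [T1] else []) = bin_incr bs"
      using Cons.IH[OF bits, of "out @ [T0]"] by auto
    with \<open>b = T1\<close> show ?thesis
      by (intro exI[of _ cr] exI[of _ "T0 # X"]) (simp add: pass_table)
  qed
qed simp

lemmas pass_defs = run_pass_def sc_word_flat pass_start_def pass_finish_def pstate0_def pass_table
  pass_univ_list pass_sets_list

lemma run_pass_0: "run_pass (sc_word us As k) 0 (c, out) = (length us + length As + 1,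
    out @ [TL, TL, TL] @ num_word 1 @ range_word 2 (length us) @ range_word (length us + 2) (length As)
      @ [TR, TR])"
  by (simp add: pass_defs num_word_def)

lemma run_pass_1: "run_pass (sc_word us As k) 1 (c, out) = (length us + length As + 1,
    out @ [TL, TL] @ num_word 1 @ range_word (length us + 2) (length As) @ [TR, TR])"
  unfolding One_nat_def by (simp add: pass_defs num_word_def)

lemma run_pass_2: "run_pass (sc_word us As k) 2 (c, out) = (c, out @ [TL, TL] @ nums_word us @ [TR, TR])"
  by (simp add: pass_defs)

lemma run_pass_3: "run_pass (sc_word us As k) 3 (c, out) = (length us + length As + 1,
    out @ [TL, TL] @ concat (map trans_word (collector_trans 1 us))
      @ concat (map trans_word (set_trans (length us + 1) As)) @ [TR, TR])"
  by (simp add: pass_defs)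

lemma run_pass_4: "run_pass (sc_word us As k) 4 (c, out) =
    (length us + 1, out @ [TL, TL] @ num_word (length us + 1) @ [TR, TR])"
  by (simp add: pass_defs num_word_def)

lemma run_pass_5: "run_pass (sc_word us As k) 5 (c, out) = (c, out @ [TL] @ bin (Suc k) @ [TR, TR])"
proof -
  let ?prefix = "[TL, TL, TL] @ nums_word us @ [TR, TR, TL, TL] @ sets_word As @ [TR, TR, TL]"
  have prefix: "fold (pass_step 5) ?prefix (pstate0, exec_instrs (pass_start 5) (c, out)) =
      ((3, 2, Suc 0), c, out @ [TL])"
    by (simp add: pass_start_def pstate0_def pass_table pass_univ_list pass_sets_list)
  obtain cr X where bits: "fold (pass_step 5) (bin k) ((3, 2, Suc 0), c, out @ [TL]) =
      ((3, 2, cr), c, out @ [TL] @ X)"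
    and incr: "X @ (if cr = 1 then [T1] else []) = bin (Suc k)"
    using pass5_incr_bits[OF set_bin_subset, of k c "out @ [TL]"] unfolding bin_Suc append_assoc by blast
  let ?s0 = "(pstate0, exec_instrs (pass_start 5) (c, out))"
  have "fold (pass_step 5) (sc_word us As k) ?s0 =
      fold (pass_step 5) [TR, TR] (fold (pass_step 5) (bin k) (fold (pass_step 5) ?prefix ?s0))"
    by (simp add: sc_word_flat)
  also have "\<dots> = ((3, 0, cr), c, out @ [TL] @ X)"
    unfolding prefix bits by (simp add: pass_table)
  finally have "fold (pass_step 5) (sc_word us As k) ?s0 = ((3, 0, cr), c, out @ [TL] @ X)" .
  then show ?thesis
    using incr by (cases "cr = 1") (simp_all add: run_pass_def pass_finish_def)
qed

lemma reduce_word_sc_word: "reduce_word (sc_word us As k) = enc_list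
   [enc_list (map bin [1..<length us + 2 + length As]),
    enc_list (map bin (1 # [length us + 2..<length us + 2 + length As])),
    enc_list (map bin us),
    enc_list (map trans_enc (collector_trans 1 us @ set_trans (length us + 1) As)),
    enc_list [bin (length us + 1)],
    bin (Suc k)]"
proof -
  let ?n = "length us" and ?m = "length As"
  have passes: "[0..<6] = [0, 1, 2, 3, 4, 5::nat]"
    by (simp add: upt_rec)
  have states: "enc_list (map bin [1..<?n + 2 + ?m]) =
      TL # num_word 1 @ range_word 2 ?n @ range_word (?n + 2) ?m @ [TR]"
  proof -
    have "?n + 2 + ?m = 1 + Suc (?n + ?m)" by simp
    then have "enc_list (map bin [1..<?n + 2 + ?m]) = TL # range_word 1 (Suc (?n + ?m)) @ [TR]"
      by (simp only: enc_list_map_bin range_word_def)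
    also have "range_word 1 (Suc (?n + ?m)) = num_word 1 @ range_word 2 (?n + ?m)"
      by (simp add: range_word_Suc numeral_2_eq_2)
    also have "\<dots> = num_word 1 @ range_word 2 ?n @ range_word (?n + 2) ?m"
      by (simp add: range_word_add add.commute)
    finally show ?thesis by simp
  qed
  have init: "enc_list (map bin (1 # [?n + 2..<?n + 2 + ?m])) = TL # num_word 1 @ range_word (?n + 2) ?m @ [TR]"
    by (simp only: enc_list_map_bin nums_word_simps range_word_def append_assoc append_Cons)
  have msgs: "enc_list (map bin us) = TL # nums_word us @ [TR]"
    by (rule enc_list_map_bin)
  have trans: "enc_list (map trans_enc (collector_trans 1 us @ set_trans (?n + 1) As)) =
      TL # concat (map trans_word (collector_trans 1 us)) @ concat (map trans_word (set_trans (?n + 1) As)) @ [TR]"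
    by (simp add: enc_list_def trans_word_def[abs_def] o_def)
  have target: "enc_list [bin (?n + 1)] = TL # num_word (?n + 1) @ [TR]"
    using enc_list_map_bin[of "[?n + 1]"] by simp
  show ?thesis
    unfolding reduce_word_def passes states init msgs trans target
    by (simp only: fold_simps run_pass_0 run_pass_1 run_pass_2 run_pass_3 run_pass_4 run_pass_5 snd_conv
        enc_list_def list.map concat.simps append_assoc append_Cons append_Nil)
qed

section \<open>The MinCover instance and its correctness\<close>

lemma set_collector_trans:
  "set (collector_trans c us) = (\<lambda>i. (c + i, Rc (us ! i), Suc (c + i))) ` {..<length us}"
  by (induction us arbitrary: c) (simp_all add: lessThan_Suc_eq_insert_0 image_image)

lemma set_set_trans:
  "set (set_trans c As) = (\<Union>j<length As. (\<lambda>a. (Suc c + j, Bc a, Suc c + j)) ` set (As ! j))"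
  by (induction As arbitrary: c) (simp_all add: lessThan_Suc_eq_insert_0 image_image)

abbreviation set_states :: "nat list \<Rightarrow> nat list list \<Rightarrow> nat set" where
  "set_states us As \<equiv> {length us + 2..<length us + 2 + length As}"

text \<open>The transitions are taken to be the entries of the list that pass 3 writes.\<close>

definition sc_trans :: "nat list \<Rightarrow> nat list list \<Rightarrow> (nat \<times> act \<times> nat) set" where
  "sc_trans us As = set (collector_trans 1 us @ set_trans (length us + 1) As)"

definition sc_proto :: "nat list \<Rightarrow> nat list list \<Rightarrow> proto" where
  "sc_proto us As = ({1..<length us + 2 + length As}, insert 1 (set_states us As), set us, sc_trans us As)"

definition sc_mc :: "nat list \<Rightarrow> nat list list \<Rightarrow> nat \<Rightarrow> mc_inst" where
  "sc_mc us As k = (sc_proto us As, {length us + 1}, Suc k)"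

lemma sc_trans_iff: "(q, a, q') \<in> sc_trans us As \<longleftrightarrow>
    (\<exists>i<length us. q = Suc i \<and> a = Rc (us ! i) \<and> q' = Suc (Suc i)) \<or>
    (\<exists>j<length As. \<exists>m\<in>set (As ! j). q = length us + 2 + j \<and> a = Bc m \<and> q' = q)"
  by (auto simp: sc_trans_def set_collector_trans set_set_trans)

lemma trans_sc_proto [simp]: "trans (sc_proto us As) = sc_trans us As"
  by (simp add: trans_def sc_proto_def)

lemma init_states_sc_proto [simp]: "init_states (sc_proto us As) = insert 1 (set_states us As)"
  by (simp add: init_states_def sc_proto_def)

lemma wf_mc_sc_mc:
  assumes "\<forall>A\<in>set As. set A \<subseteq> set us"
  shows "wf_mc (sc_mc us As k)"
proof -
  have "\<exists>m\<in>set us. a = Bc m \<or> a = Rc m" if "(q, a, q') \<in> sc_trans us As" for q a q'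
    using that assms nth_mem unfolding sc_trans_iff by fastforce
  moreover have "q \<in> {1..<length us + 2 + length As} \<and> q' \<in> {1..<length us + 2 + length As}"
    if "(q, a, q') \<in> sc_trans us As" for q a q'
    using that unfolding sc_trans_iff by auto
  ultimately show ?thesis
    by (auto simp: wf_mc_def sc_mc_def sc_proto_def wf_proto_def trans_def sc_trans_def)
qed

definition bcast :: "proto \<Rightarrow> nat set \<Rightarrow> (nat \<times> nat) set \<Rightarrow> (nat \<Rightarrow> nat) \<Rightarrow> (nat \<Rightarrow> nat) \<Rightarrow> bool" where
  "bcast P V E L L' = (\<exists>v\<in>V. \<exists>m. (L v, Bc m, L' v) \<in> trans P \<and>
     (\<forall>u\<in>V. (v, u) \<in> E \<longrightarrow> recv P (L u) m (L' u)) \<and>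
     (\<forall>u\<in>V. u \<noteq> v \<and> (v, u) \<notin> E \<longrightarrow> L' u = L u))"

definition bcast_step :: "proto \<Rightarrow> conf \<Rightarrow> conf \<Rightarrow> bool" where
  "bcast_step P \<gamma> \<gamma>' = (case \<gamma> of (V, E, L) \<Rightarrow> case \<gamma>' of (V', E', L') \<Rightarrow>
     V' = V \<and> (\<exists>v\<in>V. \<exists>m. (L v, Bc m, L' v) \<in> trans P \<and>
        (\<forall>u\<in>V. u \<noteq> v \<longrightarrow> L' u = L u \<or> recv P (L u) m (L' u))))"

lemma rstep_if_bcast: "ugraph V E \<Longrightarrow> bcast P V E L L' \<Longrightarrow> rstep P (V, E, L) (V, E, L')"
  unfolding rstep_def bcast_def by auto

lemma lstep_if_bcast: "bcast P V E L L' \<Longrightarrow> lstep P (V, E, L) (V, E, L')"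
  unfolding lstep_def bcast_def by auto

lemma rstep_imp_bcast_step: "rstep P \<gamma> \<gamma>' \<Longrightarrow> bcast_step P \<gamma> \<gamma>'"
  unfolding rstep_def bcast_step_def by (auto split: prod.splits)

lemma lstep_imp_bcast_step: "lstep P \<gamma> \<gamma>' \<Longrightarrow> bcast_step P \<gamma> \<gamma>'"
  unfolding lstep_def bcast_step_def by (auto split: prod.splits)

subsection \<open>From a cover to an execution\<close>

lemma setcover_index_set:
  assumes "setcover (set us, set (map set As), k)"
  obtains J where "J \<subseteq> {..<length As}" "card J \<le> k" "(\<Union>j\<in>J. set (As ! j)) = set us"
proof -
  obtain C where C: "C \<subseteq> set (map set As)" "card C \<le> k" "\<Union>C = set us"
    using assms unfolding setcover_def by auto
  have "set (map set As) = (\<lambda>j. set (As ! j)) ` {..<length As}"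
    by (force simp: in_set_conv_nth)
  then obtain J where J: "J \<subseteq> {..<length As}" "inj_on (\<lambda>j. set (As ! j)) J" "C = (\<lambda>j. set (As ! j)) ` J"
    using C(1) subset_image_inj by metis
  then have "card J = card C" by (simp add: card_image)
  then show ?thesis using that J C by auto
qed

lemma bcast_collector_step:
  assumes i: "i < length us" and j: "j < length As" "us ! i \<in> set (As ! j)"
    and v: "v \<in> V" "v \<noteq> 0" "L v = length us + 2 + j" and nbrs: "\<forall>u\<in>V. (v, u) \<in> E \<longleftrightarrow> u = 0"
  shows "bcast (sc_proto us As) V E (L(0 := Suc i)) (L(0 := Suc (Suc i)))"
proof -
  have "(L v, Bc (us ! i), L v) \<in> sc_trans us As"
    using j v(3) by (auto simp: sc_trans_iff)
  moreover have "recv (sc_proto us As) (Suc i) (us ! i) (Suc (Suc i))"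
    using i by (auto simp: recv_def sc_trans_iff)
  ultimately show ?thesis
    unfolding bcast_def using v nbrs by (intro bexI[of _ v] exI[of _ "us ! i"]) auto
qed

lemma setcover_imp_mincover:
  assumes step: "\<And>V E L L'. ugraph V E \<Longrightarrow> bcast (sc_proto us As) V E L L' \<Longrightarrow>
      step (sc_proto us As) (V, E, L) (V, E, L')"
    and sc: "setcover (set us, set (map set As), k)"
  shows "mincover_with step (sc_mc us As k)"
proof -
  let ?P = "sc_proto us As"
  obtain J where J: "J \<subseteq> {..<length As}" "card J \<le> k" "(\<Union>j\<in>J. set (As ! j)) = set us"
    using setcover_index_set[OF sc] by blast
  define js where "js = sorted_list_of_set J"
  have finJ: "finite J" using J(1) finite_subset by blast
  have js: "set js = J" "length js \<le> k"
    using finJ J(2) by (simp_all add: js_def)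
  define V where "V = {0..k}"
  define E where "E = {0} \<times> {1..k} \<union> {1..k} \<times> {0}"
  define L where "L v = (if 1 \<le> v \<and> v \<le> length js then length us + 2 + js ! (v - 1) else 1)" for v
  have ug: "ugraph V E" by (auto simp: ugraph_def V_def E_def)
  have "L v \<in> insert 1 (set_states us As)" for v
    using J(1) js(1) nth_mem[of "v - 1" js] by (auto simp: L_def)
  then have "L ` V \<subseteq> init_states ?P" by (simp add: image_subset_iff)
  then have init: "initial_conf ?P (V, E, L)"
    using ug by (simp add: initial_conf_def)
  have bc: "bcast ?P V E (L(0 := Suc i)) (L(0 := Suc (Suc i)))" if i: "i < length us" for i
  proof -
    obtain j where "j \<in> J" "us ! i \<in> set (As ! j)" using J(3) i nth_mem by blast
    moreover obtain v where "1 \<le> v" "v \<le> length js" "js ! (v - 1) = j"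
      using js(1) \<open>j \<in> J\<close> by (metis Suc_leI diff_Suc_1 in_set_conv_nth le_add1 plus_1_eq_Suc)
    ultimately show ?thesis
      using i J(1) js(2) by (intro bcast_collector_step[of i us j As v]) (auto simp: L_def V_def E_def)
  qed
  have reach: "(step ?P)\<^sup>*\<^sup>* (V, E, L) (V, E, L(0 := Suc i))" if "i \<le> length us" for i
    using that
  proof (induction i)
    case 0
    have "L(0 := Suc 0) = L" by (auto simp: L_def)
    then show ?case by simp
  next
    case (Suc i)
    then show ?case using step[OF ug bc] by (meson Suc_le_lessD rtranclp.rtrancl_into_rtrancl Suc_leD)
  qed
  have "covers {length us + 1} (V, E, L(0 := Suc (length us)))"
    by (auto simp: covers_def V_def)
  moreover have "card V = Suc k" by (simp add: V_def)
  ultimately show ?thesis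
    using init reach[of "length us"] unfolding mincover_with_def sc_mc_def prod.case
    by (intro exI[of _ "(V, E, L)"] exI[of _ "(V, E, L(0 := Suc (length us)))"]) simp
qed

subsection \<open>From an execution to a cover\<close>

definition node_sets :: "nat list \<Rightarrow> nat list list \<Rightarrow> nat set \<Rightarrow> (nat \<Rightarrow> nat) \<Rightarrow> nat set set" where
  "node_sets us As V L0 = (\<lambda>v. set (As ! (L0 v - length us - 2))) ` {v \<in> V. L0 v \<in> set_states us As}"

definition collect_inv :: "nat list \<Rightarrow> nat list list \<Rightarrow> nat set \<Rightarrow> (nat \<Rightarrow> nat) \<Rightarrow> (nat \<Rightarrow> nat) \<Rightarrow> bool" where
  "collect_inv us As V L0 L \<longleftrightarrow> (\<forall>v\<in>V. (L0 v \<in> set_states us As \<and> L v = L0 v) \<or>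
     (L0 v \<notin> set_states us As \<and> L v \<in> {1..length us + 1} \<and>
      set (take (L v - 1) us) \<subseteq> \<Union>(node_sets us As V L0)))"

lemma collect_inv_init: "L0 ` V \<subseteq> insert 1 (set_states us As) \<Longrightarrow> collect_inv us As V L0 L0"
  by (auto simp: collect_inv_def)

lemma collect_inv_step:
  assumes inv: "collect_inv us As V L0 L"
    and st: "bcast_step (sc_proto us As) (V, E, L) (V', E', L')"
  shows "V' = V \<and> collect_inv us As V L0 L'"
proof -
  let ?C = "\<Union>(node_sets us As V L0)"
  have inv_at: "(L0 u \<in> set_states us As \<and> L u = L0 u) \<or>
      (L0 u \<notin> set_states us As \<and> L u \<in> {1..length us + 1} \<and> set (take (L u - 1) us) \<subseteq> ?C)"
    if "u \<in> V" for u
    using inv that unfolding collect_inv_def by blast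
  obtain v m where "V' = V" "v \<in> V" and tv: "(L v, Bc m, L' v) \<in> sc_trans us As"
    and others: "\<forall>u\<in>V. u \<noteq> v \<longrightarrow> L' u = L u \<or> recv (sc_proto us As) (L u) m (L' u)"
    using st by (auto simp: bcast_step_def)
  then obtain j where j: "j < length As" "m \<in> set (As ! j)" "L v = length us + 2 + j" "L' v = L v"
    by (auto simp: sc_trans_iff)
  have "L0 v = L v"
    using inv_at[OF \<open>v \<in> V\<close>] j(3) by auto
  then have m_covered: "m \<in> ?C"
    using \<open>v \<in> V\<close> j by (force simp: node_sets_def)
  have "(L0 u \<in> set_states us As \<and> L' u = L0 u) \<or>
      (L0 u \<notin> set_states us As \<and> L' u \<in> {1..length us + 1} \<and> set (take (L' u - 1) us) \<subseteq> ?C)"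
    if "u \<in> V" for u
  proof (cases "L' u = L u")
    case True
    then show ?thesis using inv_at[OF \<open>u \<in> V\<close>] by simp
  next
    case False
    then have "(L u, Rc m, L' u) \<in> sc_trans us As"
      using others \<open>u \<in> V\<close> j(4) by (auto simp: recv_def)
    then obtain i where i: "i < length us" "L u = Suc i" "m = us ! i" "L' u = Suc (Suc i)"
      by (auto simp: sc_trans_iff)
    then have "L0 u \<notin> set_states us As" "set (take i us) \<subseteq> ?C"
      using inv_at[OF \<open>u \<in> V\<close>] by auto
    then show ?thesis
      using i m_covered by (simp add: take_Suc_conv_app_nth)
  qed
  with \<open>V' = V\<close> show ?thesis
    unfolding collect_inv_def by blast
qed

lemma collect_inv_steps:
  assumes "(bcast_step (sc_proto us As))\<^sup>*\<^sup>* (V, E, L0) \<gamma>" "L0 ` V \<subseteq> insert 1 (set_states us As)"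
  shows "fst \<gamma> = V \<and> collect_inv us As V L0 (snd (snd \<gamma>))"
  using assms(1)
proof (induction rule: rtranclp_induct)
  case base
  then show ?case using collect_inv_init[OF assms(2)] by simp
next
  case (step \<gamma>' \<gamma>'')
  then show ?case using collect_inv_step by (metis prod.collapse)
qed

lemma mincover_imp_setcover:
  assumes wf: "\<forall>A\<in>set As. set A \<subseteq> set us"
    and step: "\<And>P \<gamma> \<gamma>'. step P \<gamma> \<gamma>' \<Longrightarrow> bcast_step P \<gamma> \<gamma>'"
    and mc: "mincover_with step (sc_mc us As k)"
  shows "setcover (set us, set (map set As), k)"
proof -
  obtain V E L0 \<gamma> where init: "initial_conf (sc_proto us As) (V, E, L0)"
    and run: "(step (sc_proto us As))\<^sup>*\<^sup>* (V, E, L0) \<gamma>"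
    and cov: "covers {length us + 1} \<gamma>" and card: "card (fst \<gamma>) = Suc k"
    using mc unfolding mincover_with_def sc_mc_def by auto
  have finV: "finite V" and L0: "L0 ` V \<subseteq> insert 1 (set_states us As)"
    using init by (auto simp: initial_conf_def ugraph_def)
  have "(bcast_step (sc_proto us As))\<^sup>*\<^sup>* (V, E, L0) \<gamma>"
    using run step by (metis mono_rtranclp)
  then have V: "fst \<gamma> = V" and inv: "collect_inv us As V L0 (snd (snd \<gamma>))"
    using collect_inv_steps L0 by blast+
  obtain x where "x \<in> V" and x: "snd (snd \<gamma>) x = length us + 1"
    using cov V by (auto simp: covers_def split: prod.splits)
  let ?C = "node_sets us As V L0"
  have "L0 x \<notin> set_states us As" and "set us \<subseteq> \<Union>?C"
    using inv \<open>x \<in> V\<close> x unfolding collect_inv_def by fastforce+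
  have C_sub: "?C \<subseteq> set (map set As)"
    by (auto simp: node_sets_def)
  then have "\<Union>?C = set us"
    using wf \<open>set us \<subseteq> \<Union>?C\<close> by auto
  moreover have "card ?C \<le> k"
  proof -
    have "card ?C \<le> card {v \<in> V. L0 v \<in> set_states us As}"
      unfolding node_sets_def using finV by (simp add: card_image_le)
    also have "\<dots> \<le> card (V - {x})"
      using finV \<open>L0 x \<notin> set_states us As\<close> by (intro card_mono) auto
    also have "\<dots> = k"
      using card V finV \<open>x \<in> V\<close> by simp
    finally show ?thesis .
  qed
  ultimately show ?thesis
    using C_sub unfolding setcover_def by auto
qed

theorem setcover_iff_mincover:
  assumes wf: "\<forall>A\<in>set As. set A \<subseteq> set us"
  shows "setcover (set us, set (map set As), k) \<longleftrightarrow> mincover_rec (sc_mc us As k)"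
    and "setcover (set us, set (map set As), k) \<longleftrightarrow> mincover_lossy (sc_mc us As k)"
proof -
  show "setcover (set us, set (map set As), k) \<longleftrightarrow> mincover_rec (sc_mc us As k)"
    unfolding mincover_rec_def
    using setcover_imp_mincover[where step = rstep, OF rstep_if_bcast]
      mincover_imp_setcover[OF wf rstep_imp_bcast_step] by blast
  have "\<And>V E L L'. ugraph V E \<Longrightarrow> bcast (sc_proto us As) V E L L' \<Longrightarrow>
      lstep (sc_proto us As) (V, E, L) (V, E, L')"
    by (rule lstep_if_bcast)
  then show "setcover (set us, set (map set As), k) \<longleftrightarrow> mincover_lossy (sc_mc us As k)"
    unfolding mincover_lossy_def
    using setcover_imp_mincover[where step = lstep]
      mincover_imp_setcover[OF wf lstep_imp_bcast_step] by blast
qed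

lemma encodes_set_natenc: "distinct xs \<Longrightarrow> encodes_set natenc (set xs) (enc_list (map bin xs))"
  unfolding encodes_set_def natenc_def
  by (intro exI[of _ xs] exI[of _ "map bin xs"]) (simp add: list_all2_conv_all_nth)

lemma encodes_set_transenc: "distinct ds \<Longrightarrow> encodes_set transenc (set ds) (enc_list (map trans_enc ds))"
  unfolding encodes_set_def
  by (intro exI[of _ ds] exI[of _ "map trans_enc ds"])
    (simp add: list_all2_conv_all_nth transenc_def trans_enc_def split: prod.splits)

lemma distinct_collector_trans: "distinct (collector_trans c us)"
  by (induction us arbitrary: c) (auto simp: set_collector_trans)

lemma distinct_set_trans: "\<forall>A\<in>set As. distinct A \<Longrightarrow> distinct (set_trans c As)"
  by (induction As arbitrary: c) (auto simp: set_set_trans distinct_map inj_on_def)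

lemma encodes_mc_reduce_word:
  assumes "distinct us" "\<forall>A\<in>set As. distinct A"
  shows "encodes_mc (sc_mc us As k) (reduce_word (sc_word us As k))"
proof -
  let ?n = "length us" and ?m = "length As"
  let ?ds = "collector_trans 1 us @ set_trans (?n + 1) As"
  have "distinct ?ds"
    using distinct_collector_trans distinct_set_trans[OF assms(2)]
    by (auto simp: set_collector_trans set_set_trans)
  then have "encodes_set transenc (sc_trans us As) (enc_list (map trans_enc ?ds))"
    unfolding sc_trans_def by (rule encodes_set_transenc)
  moreover have "encodes_set natenc {1..<?n + 2 + ?m} (enc_list (map bin [1..<?n + 2 + ?m]))"
    using encodes_set_natenc[of "[1..<?n + 2 + ?m]"] by (simp only: distinct_upt set_upt)
  moreover have "encodes_set natenc (set (1 # [?n + 2..<?n + 2 + ?m]))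
      (enc_list (map bin (1 # [?n + 2..<?n + 2 + ?m])))"
    by (rule encodes_set_natenc)
      (simp only: distinct.simps distinct_upt set_upt atLeastLessThan_iff, simp)
  then have "encodes_set natenc (insert 1 (set_states us As))
      (enc_list (map bin (1 # [?n + 2..<?n + 2 + ?m])))"
    by (simp only: list.set set_upt)
  moreover have "encodes_set natenc {?n + 1} (enc_list [bin (?n + 1)])"
    using encodes_set_natenc[of "[?n + 1]"] by (simp only: distinct_singleton list.set list.map)
  ultimately show ?thesis
    unfolding encodes_mc_def sc_mc_def sc_proto_def reduce_word_sc_word prod.case
    using encodes_set_natenc[OF assms(1)] by blast
qed

lemma list_all2_natenc: "list_all2 natenc xs ws \<Longrightarrow> ws = map bin xs"
  by (induction rule: list_all2_induct) (auto simp: natenc_def)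

lemma list_all2_encodes_set_natenc:
  "list_all2 (encodes_set natenc) Ss ws \<Longrightarrow>
    \<exists>As. Ss = map set As \<and> ws = map (\<lambda>A. enc_list (map bin A)) As \<and> (\<forall>A\<in>set As. distinct A)"
proof (induction rule: list_all2_induct)
  case (Cons S Ss w ws)
  then obtain As where "Ss = map set As" "ws = map (\<lambda>A. enc_list (map bin A)) As" "\<forall>A\<in>set As. distinct A"
    by blast
  moreover obtain A vs where "distinct A" "set A = S" "list_all2 natenc A vs" "w = enc_list vs"
    using Cons(1) unfolding encodes_set_def by blast
  ultimately show ?case
    using list_all2_natenc by (intro exI[of _ "A # As"]) auto
qed simp

lemma encodes_sc_imp_sc_word:
  assumes "wf_sc x" "encodes_sc x w"
  obtains us As k where "x = (set us, set (map set As), k)" "w = sc_word us As k" "distinct us"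
    "\<forall>A\<in>set As. distinct A" "\<forall>A\<in>set As. set A \<subseteq> set us"
proof -
  obtain U S k where x: "x = (U, S, k)" by (cases x)
  obtain wU wS where enc: "encodes_set natenc U wU" "encodes_set (encodes_set natenc) S wS"
      "w = enc_list [wU, wS, bin k]"
    using assms(2) unfolding x encodes_sc_def by auto
  obtain us ws where us: "distinct us" "set us = U" "list_all2 natenc us ws" "wU = enc_list ws"
    using enc(1) unfolding encodes_set_def by blast
  obtain Ss vs where Ss: "set Ss = S" "list_all2 (encodes_set natenc) Ss vs" "wS = enc_list vs"
    using enc(2) unfolding encodes_set_def by blast
  obtain As where As: "Ss = map set As" "vs = map (\<lambda>A. enc_list (map bin A)) As" "\<forall>A\<in>set As. distinct A"
    using list_all2_encodes_set_natenc[OF Ss(2)] by blast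
  have "w = sc_word us As k"
    using enc(3) us(3,4) Ss(3) As(2) list_all2_natenc by (simp add: sc_word_def)
  moreover have "\<forall>A\<in>set As. set A \<subseteq> set us"
    using assms(1) us(2) Ss(1) As(1) unfolding x wf_sc_def by auto
  ultimately show ?thesis
    using that x us(1,2) Ss(1) As(1,3) by auto
qed

lemma reduces_if_logspace_computes:
  assumes "logspace_computes M reduce_word"
  shows "logspace_reduces_sc_to mincover_rec \<and> logspace_reduces_sc_to mincover_lossy"
proof -
  have "\<exists>y. wf_mc y \<and> encodes_mc y (reduce_word w) \<and> (setcover x \<longleftrightarrow> mincover_rec y) \<and>
      (setcover x \<longleftrightarrow> mincover_lossy y)" if x: "wf_sc x" "encodes_sc x w" for x w
  proof -
    obtain us As k where "x = (set us, set (map set As), k)" "w = sc_word us As k" "distinct us"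
      "\<forall>A\<in>set As. distinct A" "\<forall>A\<in>set As. set A \<subseteq> set us"
      using encodes_sc_imp_sc_word[OF x] by blast
    then show ?thesis
      using wf_mc_sc_mc[of As us k] encodes_mc_reduce_word[of us As k] setcover_iff_mincover[of As us k]
      by (intro exI[of _ "sc_mc us As k"]) simp
  qed
  then show ?thesis
    unfolding logspace_reduces_sc_to_def using assms by blast
qed

section \<open>Implementing the transducer by a logspace Turing machine\<close>

definition head_bounded_step :: "tm \<Rightarrow> tok list \<Rightarrow> nat \<Rightarrow> tmconf \<Rightarrow> tmconf \<Rightarrow> bool" where
  "head_bounded_step M w B x y \<longleftrightarrow> cwhead x \<le> B \<and> y = tm_step M w x"

abbreviation reaches :: "tm \<Rightarrow> tok list \<Rightarrow> nat \<Rightarrow> tmconf \<Rightarrow> tmconf \<Rightarrow> bool" where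
  "reaches M w B \<equiv> (head_bounded_step M w B)\<^sup>*\<^sup>*"

lemma cwhead_conv [simp]: "cwhead (q, i, t, h, out) = h"
  by (simp add: cwhead_def)

lemma reaches_funpow:
  assumes "reaches M w B x y"
  shows "\<exists>n. (tm_step M w ^^ n) x = y \<and> (\<forall>m<n. cwhead ((tm_step M w ^^ m) x) \<le> B)"
  using assms
proof (induction rule: rtranclp_induct)
  case base
  then show ?case by (intro exI[of _ 0]) simp
next
  case (step y z)
  then obtain n where "(tm_step M w ^^ n) x = y" "\<forall>m<n. cwhead ((tm_step M w ^^ m) x) \<le> B"
    by blast
  with step.hyps(2) show ?case
    by (intro exI[of _ "Suc n"]) (auto simp: head_bounded_step_def less_Suc_eq)
qed

datatype cont = Advance | Rewind | Stop

text \<open>Control states. \<open>Read p \<sigma>\<close> reads the next input symbol in pass \<open>p\<close>; \<open>Exec p \<sigma> ins ph k\<close>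
  executes the instructions \<open>ins\<close> and then continues according to \<open>k\<close>, where \<open>ph\<close> is the
  phase of the sweep over the counter that the first instruction performs; \<open>Rewinding p\<close>
  returns the input head to the left end marker before pass \<open>p\<close>. Between instructions the
  work tape holds \<open>bin c\<close> in cells \<open>1, 2, \<dots>\<close> and the work head rests on the blank cell 0.\<close>

datatype ctl = Exec nat pstate "instr list" nat cont | Read nat pstate | Rewinding nat | Halt

fun ctl_step :: "ctl \<Rightarrow> tok option \<Rightarrow> bool option \<Rightarrow> ctl \<times> dir \<times> bool option \<times> dir \<times> tok option" where
  "ctl_step (Exec p \<sigma> [] ph k) a b = (case k of
      Advance \<Rightarrow> (Read p \<sigma>, Rt, b, St, None)
    | Rewind \<Rightarrow> (Rewinding (min 5 (Suc p)), Lt, b, St, None)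
    | Stop \<Rightarrow> (Halt, St, b, St, None))"
| "ctl_step (Exec p \<sigma> (Emit t # ins) ph k) a b = (Exec p \<sigma> ins 0 k, St, b, St, Some t)"
| "ctl_step (Exec p \<sigma> (EmitCounter # ins) ph k) a b =
    (if ph = 0 then (Exec p \<sigma> (EmitCounter # ins) 1 k, St, b, Rt, None)
     else if ph = 1 then (case b of
         Some x \<Rightarrow> (Exec p \<sigma> (EmitCounter # ins) 1 k, St, b, Rt, Some (if x then T1 else T0))
       | None \<Rightarrow> (Exec p \<sigma> (EmitCounter # ins) 2 k, St, b, Lt, None))
     else (case b of
         Some x \<Rightarrow> (Exec p \<sigma> (EmitCounter # ins) 2 k, St, b, Lt, None)
       | None \<Rightarrow> (Exec p \<sigma> ins 0 k, St, b, St, None)))"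
| "ctl_step (Exec p \<sigma> (Incr # ins) ph k) a b =
    (if ph = 0 then (Exec p \<sigma> (Incr # ins) 1 k, St, b, Rt, None)
     else if ph = 1 then (if b = Some True then (Exec p \<sigma> (Incr # ins) 1 k, St, Some False, Rt, None)
         else (Exec p \<sigma> (Incr # ins) 2 k, St, Some True, Lt, None))
     else (case b of
         Some x \<Rightarrow> (Exec p \<sigma> (Incr # ins) 2 k, St, b, Lt, None)
       | None \<Rightarrow> (Exec p \<sigma> ins 0 k, St, b, St, None)))"
| "ctl_step (Exec p \<sigma> (Reset # ins) ph k) a b =
    (if ph = 0 then (Exec p \<sigma> (Reset # ins) 1 k, St, b, Rt, None)
     else if ph = 1 then (case b of
         Some x \<Rightarrow> (Exec p \<sigma> (Reset # ins) 1 k, St, b, Rt, None)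
       | None \<Rightarrow> (Exec p \<sigma> (Reset # ins) 2 k, St, b, Lt, None))
     else (case b of
         Some x \<Rightarrow> (Exec p \<sigma> (Reset # ins) 2 k, St, None, Lt, None)
       | None \<Rightarrow> (Exec p \<sigma> ins 0 k, St, b, St, None)))"
| "ctl_step (Read p \<sigma>) a b = (case a of
      Some t \<Rightarrow> (Exec p (pass_next p \<sigma> t) (pass_emit p \<sigma> t) 0 Advance, St, b, St, None)
    | None \<Rightarrow> (Exec p \<sigma> (pass_finish p \<sigma>) 0 (if p = 5 then Stop else Rewind), St, b, St, None))"
| "ctl_step (Rewinding p) a b = (case a of
      Some t \<Rightarrow> (Rewinding p, Lt, b, St, None)
    | None \<Rightarrow> (Exec p pstate0 (pass_start p) 0 Advance, St, b, St, None))"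
| "ctl_step Halt a b = (Halt, St, b, St, None)"

definition pstates :: "pstate set" where "pstates = {..3} \<times> {..7} \<times> {..1}"

definition ctl_states :: "ctl set" where
  "ctl_states =
     (\<lambda>(p, \<sigma>, ins, ph, k). Exec p \<sigma> ins ph k) ` ({..<6} \<times> pstates \<times> {ins. length ins \<le> 11} \<times> {..<3} \<times> UNIV)
     \<union> (\<lambda>(p, \<sigma>). Read p \<sigma>) ` ({..<6} \<times> pstates) \<union> Rewinding ` {..<6} \<union> {Halt}"

lemma UNIV_instr: "(UNIV :: instr set) = range Emit \<union> {EmitCounter, Incr, Reset}"
  by auto (metis instr.exhaust rangeI)

lemma finite_UNIV_instr: "finite (UNIV :: instr set)"
proof -
  have "(UNIV :: tok set) = {T0, T1, TL, TR}" by (auto intro: tok.exhaust)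
  then show ?thesis unfolding UNIV_instr by (metis finite.simps finite_Un finite_imageI)
qed

lemma finite_ctl_states: "finite ctl_states"
proof -
  have "finite {ins :: instr list. length ins \<le> 11}"
    using finite_lists_length_le[OF finite_UNIV_instr, of 11] by simp
  moreover have "finite (UNIV :: cont set)"
  proof -
    have "(UNIV :: cont set) = {Advance, Rewind, Stop}" by (auto intro: cont.exhaust)
    then show ?thesis by (metis finite.emptyI finite_insert)
  qed
  ultimately show ?thesis
    unfolding ctl_states_def pstates_def by (intro finite_UnI finite_imageI finite_cartesian_product) auto
qed

lemma Exec_ctl_states [simp]:
  "Exec p \<sigma> ins ph k \<in> ctl_states \<longleftrightarrow> p < 6 \<and> \<sigma> \<in> pstates \<and> length ins \<le> 11 \<and> ph < 3"
  unfolding ctl_states_def by (auto intro!: image_eqI[of _ _ "(p, \<sigma>, ins, ph, k)"])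

lemma Read_ctl_states [simp]: "Read p \<sigma> \<in> ctl_states \<longleftrightarrow> p < 6 \<and> \<sigma> \<in> pstates"
  unfolding ctl_states_def by auto

lemma Rewinding_ctl_states [simp]: "Rewinding p \<in> ctl_states \<longleftrightarrow> p < 6"
  unfolding ctl_states_def by auto

lemma Halt_ctl_states [simp]: "Halt \<in> ctl_states"
  unfolding ctl_states_def by auto

lemma pstate0_pstates [simp]: "pstate0 \<in> pstates"
  by (simp add: pstate0_def pstates_def)

lemma pass_next_pstates: "\<sigma> \<in> pstates \<Longrightarrow> pass_next p \<sigma> t \<in> pstates"
  unfolding pstates_def pass_next_def by (auto split: tok.splits)

lemma length_pass_instrs [simp]:
  "length (pass_start p) \<le> 11" "length (pass_finish p \<sigma>) \<le> 11" "length (pass_emit p \<sigma> t) \<le> 11"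
  by (auto simp: pass_start_def pass_finish_def pass_emit_def split: prod.splits)

lemma ctl_step_ctl_states: "c \<in> ctl_states \<Longrightarrow> fst (ctl_step c a b) \<in> ctl_states"
proof (induction c a b rule: ctl_step.induct)
  case (1 p \<sigma> ph k a b)
  then show ?case by (cases k) auto
qed (auto split: option.splits simp: pass_next_pstates)

definition ctl_code :: "ctl \<Rightarrow> nat" where "ctl_code = to_nat_on ctl_states"
definition ctl_of_code :: "nat \<Rightarrow> ctl" where "ctl_of_code = from_nat_into ctl_states"

definition red_tm :: tm where
  "red_tm = \<lparr>nst = card ctl_states, q0 = ctl_code (Exec 0 pstate0 (pass_start 0) 0 Advance),
     qf = ctl_code Halt, dl = (\<lambda>q a b. case ctl_step (ctl_of_code q) a b of (c', r) \<Rightarrow> (ctl_code c', r))\<rparr>"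

lemma ctl_code_less: "c \<in> ctl_states \<Longrightarrow> ctl_code c < card ctl_states"
  using to_nat_on_finite[OF finite_ctl_states] unfolding ctl_code_def bij_betw_def by auto

lemma ctl_of_code_ctl_code [simp]: "c \<in> ctl_states \<Longrightarrow> ctl_of_code (ctl_code c) = c"
  unfolding ctl_code_def ctl_of_code_def using countable_finite[OF finite_ctl_states] by simp

lemma ctl_code_eq_iff: "c \<in> ctl_states \<Longrightarrow> d \<in> ctl_states \<Longrightarrow> ctl_code c = ctl_code d \<longleftrightarrow> c = d"
  unfolding ctl_code_def using countable_finite[OF finite_ctl_states] by simp

lemma ctl_of_code_in: "ctl_of_code q \<in> ctl_states"
  unfolding ctl_of_code_def by (rule from_nat_into) (use Halt_ctl_states in blast)

lemma wf_red_tm: "wf_tm red_tm"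
proof -
  have "ctl_code c' < card ctl_states" if "ctl_step (ctl_of_code q) a b = (c', r)" for q a b c' r
    using ctl_step_ctl_states[OF ctl_of_code_in, of q a b] ctl_code_less that by simp
  then show ?thesis
    unfolding wf_tm_def red_tm_def using ctl_code_less by (auto split: prod.splits)
qed

lemma tm_step_red_tm:
  assumes "c \<in> ctl_states" "c \<noteq> Halt"
  shows "tm_step red_tm w (ctl_code c, i, t, h, out) = (case ctl_step c (read_in w i) (t h) of
     (c', di, s, dw, ob) \<Rightarrow> (ctl_code c', min (length w + 1) (mv di i), t(h := s), mv dw h,
        out @ (case ob of None \<Rightarrow> [] | Some a \<Rightarrow> [a])))"
proof -
  have "ctl_code c \<noteq> ctl_code Halt" using assms ctl_code_eq_iff by simp
  then show ?thesis unfolding tm_step_def red_tm_def using assms by (simp split: prod.splits)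
qed

lemma funpow_tm_step_red_tm_Halt: "(tm_step red_tm w ^^ n) (ctl_code Halt, x) = (ctl_code Halt, x)"
  by (induction n) (simp_all add: tm_step_def red_tm_def)

lemma reaches_ctl_step:
  assumes "c \<in> ctl_states" "c \<noteq> Halt" "h \<le> B" "ctl_step c (read_in w i) (t h) = (c', di, s, dw, ob)"
    "reaches red_tm w B (ctl_code c', min (length w + 1) (mv di i), t(h := s), mv dw h,
       out @ (case ob of None \<Rightarrow> [] | Some a \<Rightarrow> [a])) y"
  shows "reaches red_tm w B (ctl_code c, i, t, h, out) y"
  using assms(5) tm_step_red_tm[OF assms(1,2)] assms(3,4)
  by (auto intro: converse_rtranclp_into_rtranclp simp: head_bounded_step_def)

definition work_tape :: "tok list \<Rightarrow> nat \<Rightarrow> bool option" where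
  "work_tape bs j = (if 1 \<le> j \<and> j \<le> length bs then Some (bs ! (j - 1) = T1) else None)"

lemma work_tape_0 [simp]: "work_tape bs 0 = None"
  by (simp add: work_tape_def)

lemma work_tape_beyond: "length bs < j \<Longrightarrow> work_tape bs j = None"
  by (simp add: work_tape_def)

lemma work_tape_Nil: "work_tape [] = (\<lambda>_. None)"
  by (simp add: fun_eq_iff work_tape_def)

lemma emit_counter_sweep:
  assumes cs: "Exec p \<sigma> (EmitCounter # r) 0 k \<in> ctl_states" and bits: "set bs \<subseteq> {T0, T1}"
    and iw: "i \<le> length w + 1" and B: "length bs + 1 \<le> B"
  shows "1 \<le> j \<Longrightarrow> j \<le> length bs + 1 \<Longrightarrow>
    reaches red_tm w B (ctl_code (Exec p \<sigma> (EmitCounter # r) 1 k), i, work_tape bs, j, out)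
      (ctl_code (Exec p \<sigma> (EmitCounter # r) 2 k), i, work_tape bs, length bs, out @ drop (j - 1) bs)"
proof (induction "length bs + 1 - j" arbitrary: j out)
  case 0
  then have j: "j = length bs + 1" by simp
  have tn: "work_tape bs j = None" using j by (simp add: work_tape_def)
  show ?case
    by (rule reaches_ctl_step) (use cs B j tn iw in \<open>auto simp: fun_upd_idem\<close>)
next
  case (Suc x)
  then have j: "1 \<le> j" "j \<le> length bs" by auto
  have "bs!(j-1) \<in> set bs" using j by (intro nth_mem) simp
  then have bj: "bs!(j-1) \<in> {T0, T1}" using bits by blast
  have ts: "work_tape bs j = Some (bs!(j-1) = T1)" using j by (simp add: work_tape_def)
  have e: "(if bs!(j-1) = T1 then T1 else T0) = bs!(j-1)" using bj by auto
  have d: "drop (j - 1) bs = bs!(j-1) # drop j bs"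
  proof -
    have "j - 1 < length bs" using j by simp
    then have "drop (j-1) bs = bs!(j-1) # drop (Suc (j-1)) bs" by (rule Cons_nth_drop_Suc[symmetric])
    then show ?thesis using j by simp
  qed
  have ih: "reaches red_tm w B
      (ctl_code (Exec p \<sigma> (EmitCounter # r) 1 k), i, work_tape bs, Suc j, out @ [bs!(j-1)])
      (ctl_code (Exec p \<sigma> (EmitCounter # r) 2 k), i, work_tape bs, length bs, out @ [bs!(j-1)] @ drop j bs)"
    using Suc.hyps(1)[of "Suc j" "out @ [bs!(j-1)]"] Suc.hyps(2) j by simp
  show ?case
    by (rule reaches_ctl_step) (use cs B j ts iw ih e d in \<open>auto simp: fun_upd_idem\<close>)
qed

lemma return_sweep:
  assumes cs: "Exec p \<sigma> (X # r) 0 k \<in> ctl_states" and X: "X = EmitCounter \<or> X = Incr"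
    and iw: "i \<le> length w + 1" and t0: "t 0 = None"
  shows "(\<forall>j. 1 \<le> j \<and> j \<le> h \<longrightarrow> t j \<noteq> None) \<Longrightarrow> h \<le> B \<Longrightarrow>
    reaches red_tm w B (ctl_code (Exec p \<sigma> (X # r) 2 k), i, t, h, out)
      (ctl_code (Exec p \<sigma> r 0 k), i, t, 0, out)"
proof (induction h)
  case 0
  from X show ?case
    by (elim disjE) (rule reaches_ctl_step, use cs t0 iw in \<open>auto simp: fun_upd_idem\<close>)+
next
  case (Suc h)
  then obtain v where "t (Suc h) = Some v" by fastforce
  with X Suc show ?case
    by (elim disjE) (rule reaches_ctl_step, use cs iw in \<open>auto simp: fun_upd_idem\<close>)+
qed

lemma emit_sim:
  assumes cs: "Exec p \<sigma> (Emit a # r) 0 k \<in> ctl_states" and iw: "i \<le> length w + 1"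
  shows "reaches red_tm w B (ctl_code (Exec p \<sigma> (Emit a # r) 0 k), i, work_tape bs, 0, out)
    (ctl_code (Exec p \<sigma> r 0 k), i, work_tape bs, 0, out @ [a])"
  by (rule reaches_ctl_step) (use cs iw in \<open>auto simp: fun_upd_idem\<close>)

lemma emit_counter_sim:
  assumes cs: "Exec p \<sigma> (EmitCounter # r) 0 k \<in> ctl_states" and bits: "set bs \<subseteq> {T0, T1}"
    and iw: "i \<le> length w + 1" and B: "length bs + 1 \<le> B"
  shows "reaches red_tm w B (ctl_code (Exec p \<sigma> (EmitCounter # r) 0 k), i, work_tape bs, 0, out)
    (ctl_code (Exec p \<sigma> r 0 k), i, work_tape bs, 0, out @ bs)"
proof -
  have a: "reaches red_tm w B (ctl_code (Exec p \<sigma> (EmitCounter # r) 1 k), i, work_tape bs, 1, out)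
     (ctl_code (Exec p \<sigma> (EmitCounter # r) 2 k), i, work_tape bs, length bs, out @ bs)"
    using emit_counter_sweep[OF cs bits iw B, of 1 out] by simp
  have b: "reaches red_tm w B
     (ctl_code (Exec p \<sigma> (EmitCounter # r) 2 k), i, work_tape bs, length bs, out @ bs)
     (ctl_code (Exec p \<sigma> r 0 k), i, work_tape bs, 0, out @ bs)"
    by (rule return_sweep[OF cs _ iw]) (use B in \<open>auto simp: work_tape_def\<close>)
  show ?thesis
    by (rule reaches_ctl_step) (use cs iw rtranclp_trans[OF a b] in \<open>auto simp: fun_upd_idem\<close>)
qed

lemma work_tape_update:
  "(work_tape (pre @ x # r))(Suc (length pre) := Some v) = work_tape (pre @ (if v then T1 else T0) # r)"
  by (auto simp: fun_eq_iff work_tape_def nth_append)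

lemma work_tape_snoc: "(work_tape pre)(Suc (length pre) := Some True) = work_tape (pre @ [T1])"
  by (auto simp: fun_eq_iff work_tape_def nth_append)

lemma incr_sweep:
  assumes cs: "Exec p \<sigma> (Incr # r) 0 k \<in> ctl_states" and iw: "i \<le> length w + 1"
  shows "set bs \<subseteq> {T0, T1} \<Longrightarrow> length pre + length bs + 1 \<le> B \<Longrightarrow>
    \<exists>h'. h' \<le> length (pre @ bin_incr bs) \<and>
      reaches red_tm w B (ctl_code (Exec p \<sigma> (Incr # r) 1 k), i, work_tape (pre @ bs), Suc (length pre), out)
        (ctl_code (Exec p \<sigma> (Incr # r) 2 k), i, work_tape (pre @ bin_incr bs), h', out)"
proof (induction bs arbitrary: pre)
  case Nil
  have "reaches red_tm w B (ctl_code (Exec p \<sigma> (Incr # r) 1 k), i, work_tape pre, Suc (length pre), out)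
            (ctl_code (Exec p \<sigma> (Incr # r) 2 k), i, work_tape (pre @ [T1]), length pre, out)"
    by (rule reaches_ctl_step) (use cs iw Nil in \<open>auto simp: work_tape_beyond work_tape_snoc\<close>)
  then show ?case by (intro exI[of _ "length pre"]) simp
next
  case (Cons x bs)
  then have x: "x = T0 \<or> x = T1" and bits: "set bs \<subseteq> {T0, T1}" by auto
  have ts: "work_tape (pre @ x # bs) (Suc (length pre)) = Some (x = T1)" by (simp add: work_tape_def)
  from x show ?case
  proof (elim disjE)
    assume x0: "x = T0"
    have "reaches red_tm w B
        (ctl_code (Exec p \<sigma> (Incr # r) 1 k), i, work_tape (pre @ x # bs), Suc (length pre), out)
        (ctl_code (Exec p \<sigma> (Incr # r) 2 k), i, work_tape (pre @ T1 # bs), length pre, out)"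
      by (rule reaches_ctl_step) (use cs iw Cons.prems ts x0 in \<open>auto simp: work_tape_update\<close>)
    then show ?case using x0 by (intro exI[of _ "length pre"]) simp
  next
    assume x1: "x = T1"
    obtain h' where h': "h' \<le> length ((pre @ [T0]) @ bin_incr bs)"
      "reaches red_tm w B
        (ctl_code (Exec p \<sigma> (Incr # r) 1 k), i, work_tape ((pre @ [T0]) @ bs), Suc (length (pre @ [T0])), out)
        (ctl_code (Exec p \<sigma> (Incr # r) 2 k), i, work_tape ((pre @ [T0]) @ bin_incr bs), h', out)"
      using Cons.IH[OF bits, of "pre @ [T0]"] Cons.prems by auto
    have "reaches red_tm w B
        (ctl_code (Exec p \<sigma> (Incr # r) 1 k), i, work_tape (pre @ x # bs), Suc (length pre), out)
        (ctl_code (Exec p \<sigma> (Incr # r) 2 k), i, work_tape ((pre @ [T0]) @ bin_incr bs), h', out)"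
      by (rule reaches_ctl_step) (use cs iw Cons.prems ts x1 h'(2) in \<open>auto simp: work_tape_update\<close>)
    then show ?case using x1 h'(1) by (intro exI[of _ h']) simp
  qed
qed

lemma incr_sim:
  assumes cs: "Exec p \<sigma> (Incr # r) 0 k \<in> ctl_states" and bits: "set bs \<subseteq> {T0, T1}"
    and iw: "i \<le> length w + 1" and B: "length bs + 1 \<le> B" "length (bin_incr bs) \<le> B"
  shows "reaches red_tm w B (ctl_code (Exec p \<sigma> (Incr # r) 0 k), i, work_tape bs, 0, out)
    (ctl_code (Exec p \<sigma> r 0 k), i, work_tape (bin_incr bs), 0, out)"
proof -
  obtain h' where h': "h' \<le> length (bin_incr bs)"
    "reaches red_tm w B (ctl_code (Exec p \<sigma> (Incr # r) 1 k), i, work_tape bs, 1, out)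
            (ctl_code (Exec p \<sigma> (Incr # r) 2 k), i, work_tape (bin_incr bs), h', out)"
    using incr_sweep[OF cs iw bits, of "[]" B out] B by auto
  have b: "reaches red_tm w B (ctl_code (Exec p \<sigma> (Incr # r) 2 k), i, work_tape (bin_incr bs), h', out)
     (ctl_code (Exec p \<sigma> r 0 k), i, work_tape (bin_incr bs), 0, out)"
    by (rule return_sweep[OF cs _ iw]) (use B h'(1) in \<open>auto simp: work_tape_def\<close>)
  show ?thesis
    by (rule reaches_ctl_step) (use cs iw rtranclp_trans[OF h'(2) b] in \<open>auto simp: fun_upd_idem\<close>)
qed

lemma reset_sweep:
  assumes cs: "Exec p \<sigma> (Reset # r) 0 k \<in> ctl_states"
    and iw: "i \<le> length w + 1" and B: "length bs + 1 \<le> B"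
  shows "1 \<le> j \<Longrightarrow> j \<le> length bs + 1 \<Longrightarrow>
    reaches red_tm w B (ctl_code (Exec p \<sigma> (Reset # r) 1 k), i, work_tape bs, j, out)
      (ctl_code (Exec p \<sigma> (Reset # r) 2 k), i, work_tape bs, length bs, out)"
proof (induction "length bs + 1 - j" arbitrary: j)
  case 0
  then have j: "j = length bs + 1" by simp
  have tn: "work_tape bs j = None" using j by (simp add: work_tape_def)
  show ?case
    by (rule reaches_ctl_step) (use cs B j tn iw in \<open>auto simp: fun_upd_idem\<close>)
next
  case (Suc x)
  then have j: "1 \<le> j" "j \<le> length bs" by auto
  have ts: "work_tape bs j = Some (bs!(j-1) = T1)" using j by (simp add: work_tape_def)
  have ih: "reaches red_tm w B (ctl_code (Exec p \<sigma> (Reset # r) 1 k), i, work_tape bs, Suc j, out)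
     (ctl_code (Exec p \<sigma> (Reset # r) 2 k), i, work_tape bs, length bs, out)"
    using Suc.hyps(1)[of "Suc j"] Suc.hyps(2) j by simp
  show ?case
    by (rule reaches_ctl_step) (use cs B j ts iw ih in \<open>auto simp: fun_upd_idem\<close>)
qed

lemma work_tape_take_update:
  "Suc j \<le> length bs \<Longrightarrow> (work_tape (take (Suc j) bs))(Suc j := None) = work_tape (take j bs)"
  by (auto simp: fun_eq_iff work_tape_def)

lemma reset_erase:
  assumes cs: "Exec p \<sigma> (Reset # r) 0 k \<in> ctl_states" and iw: "i \<le> length w + 1"
  shows "j \<le> length bs \<Longrightarrow> j \<le> B \<Longrightarrow>
    reaches red_tm w B (ctl_code (Exec p \<sigma> (Reset # r) 2 k), i, work_tape (take j bs), j, out)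
      (ctl_code (Exec p \<sigma> r 0 k), i, work_tape [], 0, out)"
proof (induction j)
  case 0
  show ?case
    by (rule reaches_ctl_step) (use cs iw in \<open>auto simp: fun_upd_idem\<close>)
next
  case (Suc j)
  have ts: "work_tape (take (Suc j) bs) (Suc j) = Some (bs!j = T1)"
    using Suc.prems by (simp add: work_tape_def)
  have ih: "reaches red_tm w B (ctl_code (Exec p \<sigma> (Reset # r) 2 k), i, work_tape (take j bs), j, out)
      (ctl_code (Exec p \<sigma> r 0 k), i, work_tape [], 0, out)"
    using Suc by simp
  show ?case
    by (rule reaches_ctl_step) (use cs iw ts ih Suc.prems in \<open>auto simp: work_tape_take_update\<close>)
qed

lemma reset_sim:
  assumes cs: "Exec p \<sigma> (Reset # r) 0 k \<in> ctl_states"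
    and iw: "i \<le> length w + 1" and B: "length bs + 1 \<le> B"
  shows "reaches red_tm w B (ctl_code (Exec p \<sigma> (Reset # r) 0 k), i, work_tape bs, 0, out)
    (ctl_code (Exec p \<sigma> r 0 k), i, work_tape [], 0, out)"
proof -
  have a: "reaches red_tm w B (ctl_code (Exec p \<sigma> (Reset # r) 1 k), i, work_tape bs, 1, out)
     (ctl_code (Exec p \<sigma> (Reset # r) 2 k), i, work_tape bs, length bs, out)"
    using reset_sweep[OF cs iw B, of 1 out] by simp
  have b: "reaches red_tm w B (ctl_code (Exec p \<sigma> (Reset # r) 2 k), i, work_tape bs, length bs, out)
     (ctl_code (Exec p \<sigma> r 0 k), i, work_tape [], 0, out)"
    using reset_erase[OF cs iw, of "length bs" bs B out] B by simp
  show ?thesis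
    by (rule reaches_ctl_step) (use cs iw rtranclp_trans[OF a b] in \<open>auto simp: fun_upd_idem\<close>)
qed

lemma exec_instr_sim:
  assumes cs: "Exec p \<sigma> (x # ins) 0 k \<in> ctl_states" and iw: "i \<le> length w + 1"
    and c: "c \<le> N" "fst (exec_instr x (c, out)) \<le> N" and B: "length (bin N) + 1 \<le> B"
  shows "reaches red_tm w B (ctl_code (Exec p \<sigma> (x # ins) 0 k), i, work_tape (bin c), 0, out)
     (ctl_code (Exec p \<sigma> ins 0 k), i, work_tape (bin (fst (exec_instr x (c, out)))), 0,
        snd (exec_instr x (c, out)))"
proof -
  have Bc: "length (bin c) + 1 \<le> B"
    using length_bin_mono[OF c(1)] B by simp
  show ?thesis
  proof (cases x)
    case (Emit t)
    then show ?thesis using emit_sim[OF cs[unfolded Emit] iw] by simp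
  next
    case EmitCounter
    then show ?thesis using emit_counter_sim[OF cs[unfolded EmitCounter] set_bin_subset iw Bc] by simp
  next
    case Incr
    then have "length (bin (Suc c)) \<le> length (bin N)"
      using c(2) by (intro length_bin_mono) simp
    with B have "length (bin (Suc c)) \<le> B" by linarith
    then have "length (bin_incr (bin c)) \<le> B" by (simp only: bin_Suc)
    then show ?thesis using incr_sim[OF cs[unfolded Incr] set_bin_subset iw Bc]
      by (simp only: Incr exec_instr.simps fst_conv snd_conv bin_Suc)
  next
    case Reset
    then show ?thesis using reset_sim[OF cs[unfolded Reset] iw Bc] by simp
  qed
qed

fun max_counter :: "instr list \<Rightarrow> nat \<Rightarrow> nat" where
  "max_counter [] c = c"
| "max_counter (x # ins) c = max c (max_counter ins (fst (exec_instr x (c, []))))"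

lemma max_counter_ge: "c \<le> max_counter ins c"
  by (cases ins) auto

lemma fst_exec_instr: "fst (exec_instr x (c, out)) = fst (exec_instr x (c, out'))"
  by (cases x) auto

lemma exec_instrs_sim:
  assumes "Exec p \<sigma> ins 0 k \<in> ctl_states" "i \<le> length w + 1" "max_counter ins c \<le> N"
    and B: "length (bin N) + 1 \<le> B"
  shows "reaches red_tm w B (ctl_code (Exec p \<sigma> ins 0 k), i, work_tape (bin c), 0, out)
     (ctl_code (Exec p \<sigma> [] 0 k), i, work_tape (bin (fst (exec_instrs ins (c, out)))), 0,
        snd (exec_instrs ins (c, out)))"
  using assms(1-3)
proof (induction ins arbitrary: c out)
  case (Cons x ins)
  let ?s = "exec_instr x (c, out)"
  have "max_counter ins (fst ?s) \<le> N" "c \<le> N" "fst ?s \<le> N"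
    using Cons.prems(3) max_counter_ge[of "fst ?s" ins] fst_exec_instr[of x c out "[]"] by auto
  then have "reaches red_tm w B (ctl_code (Exec p \<sigma> (x # ins) 0 k), i, work_tape (bin c), 0, out)
      (ctl_code (Exec p \<sigma> ins 0 k), i, work_tape (bin (fst ?s)), 0, snd ?s)"
    and "reaches red_tm w B (ctl_code (Exec p \<sigma> ins 0 k), i, work_tape (bin (fst ?s)), 0, snd ?s)
      (ctl_code (Exec p \<sigma> [] 0 k), i, work_tape (bin (fst (exec_instrs ins ?s))), 0, snd (exec_instrs ins ?s))"
    using exec_instr_sim[OF Cons.prems(1,2) _ _ B] Cons.IH[of "fst ?s" "snd ?s"] Cons.prems(1,2) by simp_all
  then show ?case
    by (simp add: exec_instrs_def)
qed simp

definition pass_incr :: "nat \<Rightarrow> nat" where "pass_incr p = (if p = 2 \<or> p = 5 then 0 else 1)"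

lemma pass_emit_counter_bound:
  "max_counter (pass_emit p \<sigma> t) c \<le> c + pass_incr p"
  "fst (exec_instrs (pass_emit p \<sigma> t) (c, out)) \<le> c + pass_incr p"
  unfolding pass_emit_def pass_incr_def by (auto split: prod.splits)

lemma pass_start_counter:
  "p < 6 \<Longrightarrow> fst (exec_instrs (pass_start p) (c, out)) = (if p = 2 \<or> p = 5 then c else 1)"
  "p < 6 \<Longrightarrow> max_counter (pass_start p) c \<le> max c 1"
  by (auto simp: pass_start_def)

lemma pass_finish_counter:
  "fst (exec_instrs (pass_finish p \<sigma>) (c, out)) = c" "max_counter (pass_finish p \<sigma>) c = c"
  by (auto simp: pass_finish_def)

lemma fold_pass_step_counter: "fst (snd (fold (pass_step p) xs (\<sigma>, c, out))) \<le> c + pass_incr p * length xs"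
proof (induction xs arbitrary: \<sigma> c out)
  case (Cons t xs)
  obtain c' out' where e: "exec_instrs (pass_emit p \<sigma> t) (c, out) = (c', out')" by fastforce
  then have "c' \<le> c + pass_incr p" using pass_emit_counter_bound(2)[of p \<sigma> t c out] by simp
  then show ?case using Cons.IH[of "pass_next p \<sigma> t" c' out'] e by simp
qed simp

lemma fold_pass_step_pstates: "\<sigma> \<in> pstates \<Longrightarrow> fst (fold (pass_step p) xs (\<sigma>, co)) \<in> pstates"
  by (induction xs arbitrary: \<sigma> co) (auto simp: pass_next_pstates)

lemma read_sim:
  assumes p: "p < 6" "\<sigma> \<in> pstates" and i: "1 \<le> i" "i \<le> length w"
    and m: "max_counter (pass_emit p \<sigma> (w ! (i - 1))) c \<le> N" and B: "length (bin N) + 1 \<le> B"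
  shows "reaches red_tm w B (ctl_code (Read p \<sigma>), i, work_tape (bin c), 0, out)
     (ctl_code (Read p (pass_next p \<sigma> (w ! (i - 1)))), Suc i,
        work_tape (bin (fst (exec_instrs (pass_emit p \<sigma> (w ! (i - 1))) (c, out)))), 0,
        snd (exec_instrs (pass_emit p \<sigma> (w ! (i - 1))) (c, out)))"
proof -
  let ?t = "w ! (i - 1)"
  let ?s = "pass_next p \<sigma> ?t"
  let ?r = "exec_instrs (pass_emit p \<sigma> ?t) (c, out)"
  have rd: "read_in w i = Some ?t" using i by (simp add: read_in_def)
  have cs: "Exec p ?s (pass_emit p \<sigma> ?t) 0 Advance \<in> ctl_states"
    using p by (simp add: pass_next_pstates)
  have "reaches red_tm w B (ctl_code (Exec p ?s (pass_emit p \<sigma> ?t) 0 Advance), i, work_tape (bin c), 0, out)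
     (ctl_code (Exec p ?s [] 0 Advance), i, work_tape (bin (fst ?r)), 0, snd ?r)"
    using i by (intro exec_instrs_sim[OF cs _ m B]) simp
  moreover have "reaches red_tm w B (ctl_code (Exec p ?s [] 0 Advance), i, work_tape (bin (fst ?r)), 0, snd ?r)
     (ctl_code (Read p ?s), Suc i, work_tape (bin (fst ?r)), 0, snd ?r)"
    by (rule reaches_ctl_step) (use p i in \<open>auto simp: pass_next_pstates fun_upd_idem\<close>)
  ultimately show ?thesis
    by (intro reaches_ctl_step[of "Read p \<sigma>"]) (use p rd i in \<open>auto simp: fun_upd_idem\<close>)
qed

text \<open>The hypothesis on \<open>c\<close> leaves room for one increment per remaining input symbol.\<close>

lemma scan_sim:
  assumes p: "p < 6" and B: "length (bin N) + 1 \<le> B"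
  shows "\<sigma> \<in> pstates \<Longrightarrow> 1 \<le> i \<Longrightarrow> i \<le> length w + 1 \<Longrightarrow> c + pass_incr p * (length w + 1 - i) \<le> N \<Longrightarrow>
    reaches red_tm w B (ctl_code (Read p \<sigma>), i, work_tape (bin c), 0, out)
      (case fold (pass_step p) (drop (i - 1) w) (\<sigma>, c, out) of (\<sigma>', c', out') \<Rightarrow>
         (ctl_code (Read p \<sigma>'), length w + 1, work_tape (bin c'), 0, out'))"
proof (induction "length w + 1 - i" arbitrary: i \<sigma> c out)
  case 0
  then show ?case by simp
next
  case (Suc x)
  then have i: "1 \<le> i" "i \<le> length w" by auto
  let ?t = "w ! (i - 1)"
  let ?r = "exec_instrs (pass_emit p \<sigma> ?t) (c, out)"
  have d: "drop (i - 1) w = ?t # drop i w"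
    using i Cons_nth_drop_Suc[of "i - 1" w] by simp
  have "1 \<le> length w + 1 - i" using i by simp
  then have "pass_incr p \<le> pass_incr p * (length w + 1 - i)"
    using mult_le_mono2 by fastforce
  then have "max_counter (pass_emit p \<sigma> ?t) c \<le> N"
    using pass_emit_counter_bound(1)[of p \<sigma> ?t c] Suc.prems(4) by linarith
  then have a: "reaches red_tm w B (ctl_code (Read p \<sigma>), i, work_tape (bin c), 0, out)
     (ctl_code (Read p (pass_next p \<sigma> ?t)), Suc i, work_tape (bin (fst ?r)), 0, snd ?r)"
    by (rule read_sim[OF p Suc.prems(1) i _ B])
  have "pass_incr p * (length w + 1 - i) = pass_incr p + pass_incr p * (length w + 1 - Suc i)"
    using i by (simp add: Suc_diff_le algebra_simps)
  then have "fst ?r + pass_incr p * (length w + 1 - Suc i) \<le> N"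
    using pass_emit_counter_bound(2)[of p \<sigma> ?t c out] Suc.prems(4) by linarith
  then have b: "reaches red_tm w B (ctl_code (Read p (pass_next p \<sigma> ?t)), Suc i, work_tape (bin (fst ?r)), 0, snd ?r)
      (case fold (pass_step p) (drop i w) (pass_next p \<sigma> ?t, fst ?r, snd ?r) of (\<sigma>', c', out') \<Rightarrow>
         (ctl_code (Read p \<sigma>'), length w + 1, work_tape (bin c'), 0, out'))"
    using Suc.hyps(1)[of "Suc i" "pass_next p \<sigma> ?t" "fst ?r" "snd ?r"] Suc.hyps(2) i
      pass_next_pstates[OF Suc.prems(1)] by simp
  have "fold (pass_step p) (drop (i - 1) w) (\<sigma>, c, out) =
      fold (pass_step p) (drop i w) (pass_next p \<sigma> ?t, fst ?r, snd ?r)"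
    using d by simp
  then show ?case using rtranclp_trans[OF a b] by simp
qed

lemma rewind_sim:
  assumes "p < 6"
  shows "j \<le> length w \<Longrightarrow> reaches red_tm w B (ctl_code (Rewinding p), j, t, 0, out)
    (ctl_code (Exec p pstate0 (pass_start p) 0 Advance), 0, t, 0, out)"
proof (induction j)
  case 0
  show ?case by (rule reaches_ctl_step) (use assms in \<open>auto simp: fun_upd_idem read_in_def\<close>)
next
  case (Suc j)
  have "read_in w (Suc j) = Some (w ! j)" using Suc.prems by (simp add: read_in_def)
  then show ?case by (intro reaches_ctl_step[of "Rewinding p"]) (use assms Suc in \<open>auto simp: fun_upd_idem\<close>)
qed

definition next_conf :: "nat \<Rightarrow> tok list \<Rightarrow> nat \<times> tok list \<Rightarrow> tmconf" where
  "next_conf p w co = (if p < 5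
     then (ctl_code (Exec (Suc p) pstate0 (pass_start (Suc p)) 0 Advance), 0, work_tape (bin (fst co)), 0, snd co)
     else (ctl_code Halt, length w + 1, work_tape (bin (fst co)), 0, snd co))"

lemma pass_scan_sim:
  assumes p: "p < 6" and N: "N = length w + 1" and B: "length (bin N) + 1 \<le> B" and c: "c \<le> N"
    and run: "fold (pass_step p) w (pstate0, exec_instrs (pass_start p) (c, out)) = (\<sigma>', c', out')"
  shows "reaches red_tm w B (ctl_code (Exec p pstate0 (pass_start p) 0 Advance), 0, work_tape (bin c), 0, out)
      (ctl_code (Read p \<sigma>'), length w + 1, work_tape (bin c'), 0, out')"
    and "\<sigma>' \<in> pstates" "c' \<le> N"
proof -
  obtain c1 o1 where start: "exec_instrs (pass_start p) (c, out) = (c1, o1)" by fastforce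
  have c1: "c1 + pass_incr p * length w \<le> N"
    using pass_start_counter(1)[OF p, of c out] start c N by (auto simp: pass_incr_def)
  have s1: "reaches red_tm w B (ctl_code (Exec p pstate0 (pass_start p) 0 Advance), 0, work_tape (bin c), 0, out)
      (ctl_code (Exec p pstate0 [] 0 Advance), 0, work_tape (bin c1), 0, o1)"
    using exec_instrs_sim[of p pstate0 "pass_start p" Advance 0 w c N B out]
      p pass_start_counter(2)[OF p, of c] c N B start by simp
  have s2: "reaches red_tm w B (ctl_code (Exec p pstate0 [] 0 Advance), 0, work_tape (bin c1), 0, o1)
      (ctl_code (Read p pstate0), 1, work_tape (bin c1), 0, o1)"
    by (rule reaches_ctl_step) (use p in \<open>auto simp: fun_upd_idem\<close>)
  have s3: "reaches red_tm w B (ctl_code (Read p pstate0), 1, work_tape (bin c1), 0, o1)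
      (ctl_code (Read p \<sigma>'), length w + 1, work_tape (bin c'), 0, out')"
    using scan_sim[OF p B, where \<sigma> = pstate0 and i = 1 and c = c1 and out = o1 and w = w] c1 run start
    by simp
  from rtranclp_trans[OF s1 rtranclp_trans[OF s2 s3]]
  show "reaches red_tm w B (ctl_code (Exec p pstate0 (pass_start p) 0 Advance), 0, work_tape (bin c), 0, out)
      (ctl_code (Read p \<sigma>'), length w + 1, work_tape (bin c'), 0, out')" .
  show "\<sigma>' \<in> pstates"
    using fold_pass_step_pstates[of pstate0 p w "(c1, o1)"] run start by simp
  show "c' \<le> N"
    using fold_pass_step_counter[of p w pstate0 c1 o1] run start c1 by simp
qed

lemma pass_finish_sim:
  assumes p: "p < 6" and \<sigma>: "\<sigma> \<in> pstates" and B: "length (bin N) + 1 \<le> B" and c: "c \<le> N"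
  shows "reaches red_tm w B (ctl_code (Read p \<sigma>), length w + 1, work_tape (bin c), 0, out)
    (next_conf p w (exec_instrs (pass_finish p \<sigma>) (c, out)))"
proof -
  let ?k = "if p = 5 then Stop else Rewind"
  let ?o = "snd (exec_instrs (pass_finish p \<sigma>) (c, out))"
  have s1: "reaches red_tm w B (ctl_code (Read p \<sigma>), length w + 1, work_tape (bin c), 0, out)
      (ctl_code (Exec p \<sigma> (pass_finish p \<sigma>) 0 ?k), length w + 1, work_tape (bin c), 0, out)"
    by (rule reaches_ctl_step) (use p \<sigma> in \<open>auto simp: fun_upd_idem read_in_def\<close>)
  have s2: "reaches red_tm w B
      (ctl_code (Exec p \<sigma> (pass_finish p \<sigma>) 0 ?k), length w + 1, work_tape (bin c), 0, out)
      (ctl_code (Exec p \<sigma> [] 0 ?k), length w + 1, work_tape (bin c), 0, ?o)"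
    using exec_instrs_sim[of p \<sigma> "pass_finish p \<sigma>" ?k "length w + 1" w c N B out]
      p \<sigma> c B by (simp add: pass_finish_counter split del: if_split)
  have s3: "reaches red_tm w B (ctl_code (Exec p \<sigma> [] 0 ?k), length w + 1, work_tape (bin c), 0, ?o)
      (next_conf p w (c, ?o))"
  proof (cases "p < 5")
    case True
    have "reaches red_tm w B (ctl_code (Rewinding (Suc p)), length w, work_tape (bin c), 0, ?o)
        (ctl_code (Exec (Suc p) pstate0 (pass_start (Suc p)) 0 Advance), 0, work_tape (bin c), 0, ?o)"
      by (rule rewind_sim) (use True in simp_all)
    then show ?thesis
      unfolding next_conf_def
      by - (rule reaches_ctl_step, use True \<sigma> in \<open>auto simp: fun_upd_idem\<close>)
  next
    case False
    with p have "p = 5" by simp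
    then show ?thesis
      unfolding next_conf_def
      by - (rule reaches_ctl_step, use \<sigma> in \<open>auto simp: fun_upd_idem\<close>)
  qed
  have "exec_instrs (pass_finish p \<sigma>) (c, out) = (c, ?o)"
    using pass_finish_counter(1) by (metis prod.collapse)
  with rtranclp_trans[OF s1 rtranclp_trans[OF s2 s3]] show ?thesis
    by simp
qed

lemma pass_sim:
  assumes "p < 6" "N = length w + 1" "length (bin N) + 1 \<le> B" "c \<le> N"
  shows "reaches red_tm w B (ctl_code (Exec p pstate0 (pass_start p) 0 Advance), 0, work_tape (bin c), 0, out)
      (next_conf p w (run_pass w p (c, out)))"
    and "fst (run_pass w p (c, out)) \<le> N"
proof -
  obtain \<sigma>' c' out' where run: "fold (pass_step p) w (pstate0, exec_instrs (pass_start p) (c, out)) = (\<sigma>', c', out')"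
    by (metis prod.exhaust)
  then have e: "run_pass w p (c, out) = exec_instrs (pass_finish p \<sigma>') (c', out')"
    by (simp add: run_pass_def)
  note scan = pass_scan_sim[OF assms run]
  show "reaches red_tm w B (ctl_code (Exec p pstate0 (pass_start p) 0 Advance), 0, work_tape (bin c), 0, out)
      (next_conf p w (run_pass w p (c, out)))"
    unfolding e using rtranclp_trans[OF scan(1) pass_finish_sim[OF assms(1) scan(2) assms(3) scan(3)]] .
  show "fst (run_pass w p (c, out)) \<le> N"
    unfolding e pass_finish_counter(1) by (rule scan(3))
qed

lemma passes_sim:
  assumes N: "N = length w + 1" and B: "length (bin N) + 1 \<le> B"
  shows "p \<le> 5 \<Longrightarrow> reaches red_tm w B (ctl_code (Exec 0 pstate0 (pass_start 0) 0 Advance), 0, work_tape [], 0, [])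
      (ctl_code (Exec p pstate0 (pass_start p) 0 Advance), 0, work_tape (bin (fst (fold (run_pass w) [0..<p] (0, [])))),
        0, snd (fold (run_pass w) [0..<p] (0, [])))
    \<and> fst (fold (run_pass w) [0..<p] (0, [])) \<le> N"
proof (induction p)
  case (Suc p)
  let ?s = "fold (run_pass w) [0..<p] (0, [])"
  have "reaches red_tm w B (ctl_code (Exec 0 pstate0 (pass_start 0) 0 Advance), 0, work_tape [], 0, [])
      (ctl_code (Exec p pstate0 (pass_start p) 0 Advance), 0, work_tape (bin (fst ?s)), 0, snd ?s)"
    and "fst ?s \<le> N"
    using Suc by auto
  moreover note pass_sim[of p N w B "fst ?s" "snd ?s"]
  ultimately show ?case
    using N B Suc.prems by (auto simp: next_conf_def elim: rtranclp_trans)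
qed simp

lemma run_sim:
  assumes "N = length w + 1" "length (bin N) + 1 \<le> B"
  obtains t where "reaches red_tm w B (ctl_code (Exec 0 pstate0 (pass_start 0) 0 Advance), 0, work_tape [], 0, [])
    (ctl_code Halt, length w + 1, t, 0, reduce_word w)"
proof -
  let ?s = "fold (run_pass w) [0..<5] (0, [])"
  have "[0..<6] = [0..<5] @ [5::nat]" by (simp add: upt_rec)
  then have "reduce_word w = snd (run_pass w 5 ?s)" by (simp add: reduce_word_def)
  moreover have "reaches red_tm w B (ctl_code (Exec 0 pstate0 (pass_start 0) 0 Advance), 0, work_tape [], 0, [])
      (ctl_code (Exec 5 pstate0 (pass_start 5) 0 Advance), 0, work_tape (bin (fst ?s)), 0, snd ?s)"
    and "fst ?s \<le> N"
    using passes_sim[OF assms, of 5] by auto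
  moreover note pass_sim(1)[of 5 N w B "fst ?s" "snd ?s"]
  ultimately show ?thesis
    using assms by (intro that) (auto simp: next_conf_def elim: rtranclp_trans)
qed

lemma red_tm_run:
  obtains n where "cstate (tm_run red_tm w n) = qf red_tm" "coutput (tm_run red_tm w n) = reduce_word w"
    and "\<And>m. cwhead (tm_run red_tm w m) \<le> length (bin (length w + 1)) + 1"
proof -
  let ?B = "length (bin (length w + 1)) + 1"
  obtain t where "reaches red_tm w ?B (tm_run red_tm w 0) (ctl_code Halt, length w + 1, t, 0, reduce_word w)"
    using run_sim[of "length w + 1" w ?B] by (auto simp: tm_run_def red_tm_def work_tape_Nil)
  then obtain n where halt: "tm_run red_tm w n = (ctl_code Halt, length w + 1, t, 0, reduce_word w)"
    and bounded: "\<forall>m<n. cwhead (tm_run red_tm w m) \<le> ?B"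
    using reaches_funpow by (fastforce simp: tm_run_def)
  have "cwhead (tm_run red_tm w m) \<le> ?B" for m
  proof (cases "m < n")
    case False
    then have "m = (m - n) + n" by simp
    then have "tm_run red_tm w m = (tm_step red_tm w ^^ (m - n)) (tm_run red_tm w n)"
      unfolding tm_run_def by (metis funpow_add o_apply)
    then show ?thesis using halt funpow_tm_step_red_tm_Halt by simp
  qed (use bounded in blast)
  moreover have "cstate (tm_run red_tm w n) = qf red_tm" "coutput (tm_run red_tm w n) = reduce_word w"
    unfolding halt by (simp_all add: cstate_def coutput_def red_tm_def)
  ultimately show ?thesis
    using that by blast
qed

theorem logspace_computes_red_tm: "logspace_computes red_tm reduce_word"
proof -
  have "(\<exists>n. cstate (tm_run red_tm w n) = qf red_tm \<and> coutput (tm_run red_tm w n) = reduce_word w) \<and>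
      (\<forall>n. real (cwhead (tm_run red_tm w n)) \<le> 3 * log 2 (real (length w) + 2))" for w
  proof -
    obtain n where "cstate (tm_run red_tm w n) = qf red_tm" "coutput (tm_run red_tm w n) = reduce_word w"
      and head: "\<And>m. cwhead (tm_run red_tm w m) \<le> length (bin (length w + 1)) + 1"
      using red_tm_run[where w = w] by blast
    moreover have "real (cwhead (tm_run red_tm w m)) \<le> 3 * log 2 (real (length w) + 2)" for m
      using head[of m] length_bin_Suc_le_log[of "length w"] by simp
    ultimately show ?thesis by blast
  qed
  then show ?thesis
    unfolding logspace_computes_def using wf_red_tm by blast
qed

theorem lemma5p2:
  shows "logspace_reduces_sc_to mincover_rec \<and> logspace_reduces_sc_to mincover_lossy"
  by (rule reduces_if_logspace_computes[OF logspace_computes_red_tm])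

end
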